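(* Let $E$ be a Borel space and $Q$ a semi-Markov kernel on $\mathbb{R}_+\times E$ given $E$ satisfying: there exist $\delta>0$, $\epsilon>0$ with $Q(\delta,E\mid x)\le1-\epsilon$ for all $x\in E$. Let $c,g:E\to[0,\infty)$ be measurable and $T\in\mathbb{R}_+$. Then for every $\pi=\{d_n,n\ge0\}\in\Pi^0_{DH}$, $$U^\pi(s,x)=V^{\tau^s_\pi}(s,x)\qquad\text{for all }x\in E,\ s\in[0,T],$$ where $\tau^s_\pi$ is the stopping time induced by $\pi$ and $s$.
   Context: SMP: Semi-Markov kernel means: for each $B\in\mathcal{B}(E)$, $x$, $t\mapsto Q(t,B\mid x)$ nondecreasing, right-continuous, $Q(0,B\mid x)=0$; $Q(t,\cdot\mid\cdot)$ substochastic; $\lim_{t\to\infty}Q(t,\cdot\mid\cdot)$ stochastic. $\Omega=\{(x_0,t_1,x_1,\dots): x_0\in E,(t_n,x_n)\in\mathbb{R}_+\times E\}$; $X_n(\omega)=x_n$, $T_0=0$, $T_{n+1}(\omega)=t_{n+1}$, $S_n=\sum_{k=0}^nT_k$, $Y_n=(X_0,T_1,X_1,\dots,T_n,X_n)$, $\mathcal{F}_n=\sigma(T_0,X_0,\dots,T_n,X_n)$; $\mathbb{P}_x$ is the unique probability with $\mathbb{P}_x(T_0=0,X_0=x)=1$ and $\mathbb{P}_x(T_{n+1}\le t,X_{n+1}\in B\mid Y_n)=Q(t,B\mid X_n)$, $\mathbb{E}_x$ its expectation; $X(t)=X_n$ for $S_n\le t<S_{n+1}$. A stopping time is $\tau:\Omega\to\mathbb{N}\cup\{\infty\}$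 with $\{\tau=n\}\in\mathcal{F}_n$. $R^s_\tau=\int_0^{S_\tau}c(X(t))\,dt+g(X(S_\tau))$ if $S_\tau<s$, and $\int_0^sc(X(t))\,dt$ if $S_\tau\ge s$ ($S_\tau=\lim_nS_n$ on $\{\tau=\infty\}$); $V^\tau(s,x)=\mathbb{E}_x[R^s_\tau]$. Constructed SMDP: $\hat E=E\cup\{\Delta\}$, $A=\{0,1\}$, $A(x)=\{0,1\}$ for $x\in E$, $A(\Delta)=\{1\}$; $\hat Q_T(t,B\mid x,0)=Q(t,B\setminus\{\Delta\}\mid x)$ for $x\in E$, $\hat Q_T(t,B\mid x,1)=\mathbf{1}_{[T+1,\infty)}(t)\delta_\Delta(B)$ for $x\in\hat E$; $\hat c(x,a)=c(x)$ if $x\in E,a=0$, else $0$; $\hat g(x,a)=g(x)$ if $x\in E,a=1$, else $0$. $\hat H_n$: histories $\hat h_n=(x_0,a_0,t_1,x_1,\dots,a_{n-1},t_n,x_n)$ with $a_m\in A(x_m)$. A deterministic policy $\pi=\{d_n\}$ consists of measurable $d_n:\mathbb{R}\times\hat H_n\to A$ with $d_n(s,\hat h_n)\in A(x_n)$; on $\hat\Omega=(\hat E\times A\times\mathbb{R}_+)^\infty$ with coordinates $\hat X_n,A_n,\hat T_{n+1}$, $\hat T_0=0$, $\hat S_n=\sum_{m\le n}\hat T_m$, $\hat Y_n=(\hat X_0,A_0,\hat T_1,\dots,\hat T_n,\hat X_n)$, $\hat{\mathbb{P}}^\pi_{(s,x)}$ is the unique probability with $\hat X_0=x$, $\hat T_0=0$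 a.s., $A_n=d_n(s-\hat S_n,\hat Y_n)$ a.s., and $\hat{\mathbb{P}}^\pi_{(s,x)}(\hat T_{n+1}\le t,\hat X_{n+1}\in B\mid\hat Y_n,A_n)=\hat Q_T(t,B\mid\hat X_n,A_n)$; $\hat X(t)=\hat X_n$, $A(t)=A_n$ for $\hat S_n\le t<\hat S_{n+1}$; $U^\pi(s,x)=\hat{\mathbb{E}}^\pi_{(s,x)}\big[\int_0^s\hat c(\hat X(t),A(t))\,dt+\hat g(\hat X(s),A(s))\big]$. $H^0_n=E\times(\{0\}\times\mathbb{R}_+\times E)^n\subset\hat H_n$; $\Pi^0_{DH}$ is the set of deterministic policies with $d_n(0,\hat h_n)=0$ for all $n$ and $\hat h_n\in H^0_n$. With $Y^0_n=(X_0,0,T_1,X_1,\dots,0,T_n,X_n)$, the stopping time induced by $\pi$ and $s\in\mathbb{R}$ is $\tau^s_\pi(\omega)=\inf\{n\in\mathbb{N}:d_n(s-S_n(\omega),Y^0_n(\omega))=1\}$, $\inf\emptyset=+\infty$. *)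

theory Defs
  imports "HOL-Probability.Probability"
begin

text \<open>The Borel space E is modelled as a Polish type 'e with its Borel sigma-algebra.
  The kernel Q(t,B|x) is rendered as the measure Q t x applied to B,
  i.e. Q(t,B|x) = measure (Q t x) B, for t >= 0.\<close>

definition semi_Markov_kernel :: "(real \<Rightarrow> 'e::polish_space \<Rightarrow> 'e measure) \<Rightarrow> bool" where
  "semi_Markov_kernel Q \<longleftrightarrow>
     (\<forall>t\<ge>0. \<forall>x. sets (Q t x) = sets (borel :: 'e measure) \<and> subprob_space (Q t x)) \<and>
     (\<forall>t\<ge>0. \<forall>B\<in>sets (borel :: 'e measure). (\<lambda>x. measure (Q t x) B) \<in> borel_measurable borel) \<and>
     (\<forall>x. \<forall>B\<in>sets (borel :: 'e measure).
        mono_on {0..} (\<lambda>t. measure (Q t x) B) \<and>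
        (\<forall>t\<ge>0. continuous (at_right t) (\<lambda>t. measure (Q t x) B)) \<and>
        measure (Q 0 x) B = 0) \<and>
     (\<forall>x. ((\<lambda>t. measure (Q t x) UNIV) \<longlongrightarrow> 1) at_top)"

text \<open>A sample point omega is a sequence with omega n = (x_n, t_{n+1}),
  i.e. omega = (x_0,t_1,x_1,t_2,...). T_0 = 0.\<close>

definition Omega :: "(nat \<Rightarrow> 'e::polish_space \<times> real) measure" where
  "Omega = (\<Pi>\<^sub>M n\<in>UNIV. (borel :: 'e measure) \<Otimes>\<^sub>M (borel :: real measure))"

text \<open>Measurable space of the histories Y_n = (X_0,T_1,X_1,...,T_n,X_n),
  represented as (omega restricted to {..<n}, x_n).\<close>
definition Hist :: "nat \<Rightarrow> ((nat \<Rightarrow> 'e::polish_space \<times> real) \<times> 'e) measure" where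
  "Hist n = (\<Pi>\<^sub>M m\<in>{..<n}. (borel :: 'e measure) \<Otimes>\<^sub>M (borel :: real measure)) \<Otimes>\<^sub>M (borel :: 'e measure)"

definition Yn :: "nat \<Rightarrow> (nat \<Rightarrow> 'e \<times> real) \<Rightarrow> (nat \<Rightarrow> 'e \<times> real) \<times> 'e" where
  "Yn n \<omega> = (restrict \<omega> {..<n}, fst (\<omega> n))"

text \<open>S_n = T_0 + ... + T_n, where T_{m+1} = snd (omega m).\<close>
definition Sn :: "nat \<Rightarrow> (nat \<Rightarrow> 'e \<times> real) \<Rightarrow> real" where
  "Sn n \<omega> = (\<Sum>m<n. snd (\<omega> m))"

definition Xt :: "real \<Rightarrow> (nat \<Rightarrow> 'e \<times> real) \<Rightarrow> 'e" where
  "Xt t \<omega> = fst (\<omega> (LEAST n. t < Sn (Suc n) \<omega>))"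

text \<open>P is (the unique) P_x: X_0 = x a.s. and
  P(T_{n+1} \<le> t, X_{n+1} \<in> B | Y_n) = Q(t,B|X_n), expressed by the defining
  property of conditional probability w.r.t. sigma(Y_n).\<close>
definition is_Px :: "(real \<Rightarrow> 'e::polish_space \<Rightarrow> 'e measure) \<Rightarrow> 'e \<Rightarrow> (nat \<Rightarrow> 'e \<times> real) measure \<Rightarrow> bool" where
  "is_Px Q x P \<longleftrightarrow>
     prob_space P \<and> sets P = sets Omega \<and>
     (AE \<omega> in P. fst (\<omega> 0) = x) \<and>
     (\<forall>n t B D. 0 \<le> t \<longrightarrow> B \<in> sets (borel :: 'e measure) \<longrightarrow> D \<in> sets (Hist n) \<longrightarrow>
        emeasure P {\<omega> \<in> space P. Yn n \<omega> \<in> D \<and> snd (\<omega> n) \<le> t \<and> fst (\<omega> (Suc n)) \<in> B}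
        = (\<integral>\<^sup>+ \<omega>. indicator {\<omega> \<in> space P. Yn n \<omega> \<in> D} \<omega> * ennreal (measure (Q t (fst (\<omega> n))) B) \<partial>P))"

text \<open>Extended state space E \<union> {Delta}: 'e option, None = Delta. Actions A = {0,1} \<subseteq> nat.\<close>

definition Ehat :: "'e::polish_space option measure" where
  "Ehat = sigma UNIV ({Some ` B | B. B \<in> sets (borel :: 'e measure)} \<union> {{None}})"

definition Aset :: "'e option \<Rightarrow> nat set" where
  "Aset x = (case x of Some _ \<Rightarrow> {0, 1} | None \<Rightarrow> {1})"

definition Qhat :: "(real \<Rightarrow> 'e \<Rightarrow> 'e measure) \<Rightarrow> real \<Rightarrow> real \<Rightarrow> 'e option set \<Rightarrow> 'e option \<Rightarrow> nat \<Rightarrow> real" where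
  "Qhat Q T t B x a =
     (case x of Some y \<Rightarrow> if a = 0 then measure (Q t y) (Some -` B)
                          else (if T + 1 \<le> t \<and> None \<in> B then 1 else 0)
              | None \<Rightarrow> (if T + 1 \<le> t \<and> None \<in> B then 1 else 0))"

definition chat :: "('e \<Rightarrow> real) \<Rightarrow> 'e option \<Rightarrow> nat \<Rightarrow> real" where
  "chat c x a = (case x of Some y \<Rightarrow> if a = 0 then c y else 0 | None \<Rightarrow> 0)"

definition ghat :: "('e \<Rightarrow> real) \<Rightarrow> 'e option \<Rightarrow> nat \<Rightarrow> real" where
  "ghat g x a = (case x of Some y \<Rightarrow> if a = 1 then g y else 0 | None \<Rightarrow> 0)"

text \<open>Sample points of the SMDP: omegahat n = (xhat_n, a_n, that_{n+1}).\<close>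
type_synonym 'e hpath = "nat \<Rightarrow> 'e option \<times> nat \<times> real"

definition StepM :: "('e::polish_space option \<times> nat \<times> real) measure" where
  "StepM = Ehat \<Otimes>\<^sub>M (count_space UNIV :: nat measure) \<Otimes>\<^sub>M (borel :: real measure)"

definition Omegahat :: "'e::polish_space hpath measure" where
  "Omegahat = (\<Pi>\<^sub>M n\<in>UNIV. StepM)"

text \<open>Histories hhat_n = (x_0,a_0,t_1,...,a_{n-1},t_n,x_n), represented as
  (h restricted to {..<n}, x_n).\<close>
definition HhatM :: "nat \<Rightarrow> ('e::polish_space hpath \<times> 'e option) measure" where
  "HhatM n = (\<Pi>\<^sub>M m\<in>{..<n}. StepM) \<Otimes>\<^sub>M Ehat"

definition Hhat :: "nat \<Rightarrow> ('e::polish_space hpath \<times> 'e option) set" where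
  "Hhat n = {(h, x) \<in> space (HhatM n).
               \<forall>m<n. 0 \<le> snd (snd (h m)) \<and> fst (snd (h m)) \<in> Aset (fst (h m))}"

text \<open>Deterministic (history dependent) policies: d n s h x is d_n(s, (h, x)).\<close>
definition det_policy :: "(nat \<Rightarrow> real \<Rightarrow> 'e::polish_space hpath \<Rightarrow> 'e option \<Rightarrow> nat) \<Rightarrow> bool" where
  "det_policy d \<longleftrightarrow>
     (\<forall>n. (\<lambda>(s, hx). d n s (fst hx) (snd hx))
            \<in> measurable (restrict_space ((borel :: real measure) \<Otimes>\<^sub>M HhatM n) (UNIV \<times> Hhat n))
                         (count_space UNIV)) \<and>
     (\<forall>n s h x. (h, x) \<in> Hhat n \<longrightarrow> d n s h x \<in> Aset x)"

definition H0 :: "nat \<Rightarrow> ('e hpath \<times> 'e option) set" where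
  "H0 n = {(h, x). h \<in> extensional {..<n} \<and>
                   (\<forall>m<n. \<exists>y t. h m = (Some y, 0, t) \<and> 0 \<le> t) \<and> x \<noteq> None}"

definition Pi0_DH :: "(nat \<Rightarrow> real \<Rightarrow> 'e::polish_space hpath \<Rightarrow> 'e option \<Rightarrow> nat) set" where
  "Pi0_DH = {d. det_policy d \<and> (\<forall>n h x. (h, x) \<in> H0 n \<longrightarrow> d n 0 h x = 0)}"

definition Shat :: "nat \<Rightarrow> 'e hpath \<Rightarrow> real" where
  "Shat n \<omega> = (\<Sum>m<n. snd (snd (\<omega> m)))"

definition Nhat :: "real \<Rightarrow> 'e hpath \<Rightarrow> nat" where
  "Nhat t \<omega> = (LEAST n. t < Shat (Suc n) \<omega>)"

definition Xhat_t :: "real \<Rightarrow> 'e hpath \<Rightarrow> 'e option" where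
  "Xhat_t t \<omega> = fst (\<omega> (Nhat t \<omega>))"

definition Ahat_t :: "real \<Rightarrow> 'e hpath \<Rightarrow> nat" where
  "Ahat_t t \<omega> = fst (snd (\<omega> (Nhat t \<omega>)))"

text \<open>Ph is (the unique) Phat^pi_{(s,x)} for the SMDP with kernel Qhat_T.\<close>
definition is_Phat :: "(real \<Rightarrow> 'e::polish_space \<Rightarrow> 'e measure) \<Rightarrow> real \<Rightarrow>
    (nat \<Rightarrow> real \<Rightarrow> 'e hpath \<Rightarrow> 'e option \<Rightarrow> nat) \<Rightarrow> real \<Rightarrow> 'e \<Rightarrow> 'e hpath measure \<Rightarrow> bool" where
  "is_Phat Q T d s x Ph \<longleftrightarrow>
     prob_space Ph \<and> sets Ph = sets Omegahat \<and>
     (AE \<omega> in Ph. fst (\<omega> 0) = Some x) \<and>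
     (\<forall>n. AE \<omega> in Ph. fst (snd (\<omega> n)) = d n (s - Shat n \<omega>) (restrict \<omega> {..<n}) (fst (\<omega> n))) \<and>
     (\<forall>n t B D. 0 \<le> t \<longrightarrow> B \<in> sets Ehat \<longrightarrow>
        D \<in> sets (HhatM n \<Otimes>\<^sub>M (count_space UNIV :: nat measure)) \<longrightarrow>
        emeasure Ph {\<omega> \<in> space Ph. ((restrict \<omega> {..<n}, fst (\<omega> n)), fst (snd (\<omega> n))) \<in> D \<and>
                                    snd (snd (\<omega> n)) \<le> t \<and> fst (\<omega> (Suc n)) \<in> B}
        = (\<integral>\<^sup>+ \<omega>. indicator {\<omega> \<in> space Ph. ((restrict \<omega> {..<n}, fst (\<omega> n)), fst (snd (\<omega> n))) \<in> D} \<omega>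
                  * ennreal (Qhat Q T t B (fst (\<omega> n)) (fst (snd (\<omega> n)))) \<partial>Ph))"

definition U_val :: "('e \<Rightarrow> real) \<Rightarrow> ('e \<Rightarrow> real) \<Rightarrow> 'e hpath measure \<Rightarrow> real \<Rightarrow> ennreal" where
  "U_val c g Ph s =
     (\<integral>\<^sup>+ \<omega>. (\<integral>\<^sup>+ t \<in> {0..s}. ennreal (chat c (Xhat_t t \<omega>) (Ahat_t t \<omega>)) \<partial>lborel)
              + ennreal (ghat g (Xhat_t s \<omega>) (Ahat_t s \<omega>)) \<partial>Ph)"

definition Y0 :: "nat \<Rightarrow> (nat \<Rightarrow> 'e \<times> real) \<Rightarrow> 'e hpath \<times> 'e option" where
  "Y0 n \<omega> = (restrict (\<lambda>m. (Some (fst (\<omega> m)), 0, snd (\<omega> m))) {..<n}, Some (fst (\<omega> n)))"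

definition tau :: "(nat \<Rightarrow> real \<Rightarrow> 'e hpath \<Rightarrow> 'e option \<Rightarrow> nat) \<Rightarrow> real \<Rightarrow> (nat \<Rightarrow> 'e \<times> real) \<Rightarrow> enat" where
  "tau d s \<omega> = (if \<exists>n. d n (s - Sn n \<omega>) (fst (Y0 n \<omega>)) (snd (Y0 n \<omega>)) = 1
                then enat (LEAST n. d n (s - Sn n \<omega>) (fst (Y0 n \<omega>)) (snd (Y0 n \<omega>)) = 1)
                else \<infinity>)"

definition S_stop :: "enat \<Rightarrow> (nat \<Rightarrow> 'e \<times> real) \<Rightarrow> ereal" where
  "S_stop k \<omega> = (case k of enat n \<Rightarrow> ereal (Sn n \<omega>) | \<infinity> \<Rightarrow> lim (\<lambda>n. ereal (Sn n \<omega>)))"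

definition reward :: "('e \<Rightarrow> real) \<Rightarrow> ('e \<Rightarrow> real) \<Rightarrow> real \<Rightarrow> enat \<Rightarrow> (nat \<Rightarrow> 'e \<times> real) \<Rightarrow> ennreal" where
  "reward c g s k \<omega> =
     (if S_stop k \<omega> < ereal s
      then (\<integral>\<^sup>+ t \<in> {t. 0 \<le> t \<and> ereal t \<le> S_stop k \<omega>}. ennreal (c (Xt t \<omega>)) \<partial>lborel)
           + ennreal (g (Xt (real_of_ereal (S_stop k \<omega>)) \<omega>))
      else (\<integral>\<^sup>+ t \<in> {0..s}. ennreal (c (Xt t \<omega>)) \<partial>lborel))"

definition V_val :: "('e \<Rightarrow> real) \<Rightarrow> ('e \<Rightarrow> real) \<Rightarrow> ((nat \<Rightarrow> 'e \<times> real) \<Rightarrow> enat) \<Rightarrow>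
    (nat \<Rightarrow> 'e \<times> real) measure \<Rightarrow> real \<Rightarrow> ennreal" where
  "V_val c g \<tau> P s = (\<integral>\<^sup>+ \<omega>. reward c g s (\<tau> \<omega>) \<omega> \<partial>P)"

end

theory Submission
  imports Defs
begin

(* The SMDP can be simulated on the path space of the semi-Markov process: copy the path with
   action 0 until the first index n at which the policy, fed with the uncontrolled history
   Y0 n, chooses 1; take action 1 there, stay for time T + 1 and remain in the cemetery state
   ever after (smdp_path). The image of P_x under this map satisfies the transition identities
   that define the SMDP measure, and these identities determine a measure on the SMDP path space
   uniquely (by induction on the length of the history); hence the image is the SMDP measure. Before the stopping epoch S_tau both
   processes collect c(X(t)); after it the SMDP only collects g(X_tau) at time s, because
   S_tau + T + 1 > s. The epoch S_tau never equals s, since d_n(0, .) = 0 on uncontrolled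
   histories. If tau is infinite, the regularity of Q gives E exp(-S_n) <= r^n with r < 1, so
   almost surely S_n reaches s and both rewards are the running cost up to s. *)

section \<open>The semi-Markov process\<close>

lemma space_Omega [simp]: "space Omega = UNIV"
  by (auto simp: Omega_def space_PiM space_pair_measure)

lemma measurable_Omega_state [measurable]: "(\<lambda>\<omega>. fst (\<omega> n)) \<in> measurable Omega borel"
  unfolding Omega_def by measurable

lemma measurable_Omega_sojourn [measurable]: "(\<lambda>\<omega>. snd (\<omega> n)) \<in> borel_measurable Omega"
  unfolding Omega_def by measurable

lemma measurable_Yn [measurable]: "Yn n \<in> measurable Omega (Hist n)"
  unfolding Yn_def Hist_def Omega_def by measurable

lemma measurable_Sn [measurable]: "Sn n \<in> borel_measurable Omega"
  unfolding Sn_def by measurable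

lemma sets_Omega_Collect: "Measurable.pred Omega p \<Longrightarrow> {\<omega>. p \<omega>} \<in> sets Omega"
  by (simp add: pred_def)

lemma Sn_0 [simp]: "Sn 0 \<omega> = 0"
  by (simp add: Sn_def)

lemma Sn_Suc: "Sn (Suc n) \<omega> = Sn n \<omega> + snd (\<omega> n)"
  by (simp add: Sn_def)

lemma Sn_mono: "\<forall>m. 0 < snd (\<omega> m) \<Longrightarrow> m \<le> n \<Longrightarrow> Sn m \<omega> \<le> Sn n \<omega>"
  unfolding Sn_def by (rule sum_mono2) (auto simp: less_imp_le)

lemma Sn_nonneg: "\<forall>m. 0 < snd (\<omega> m) \<Longrightarrow> 0 \<le> Sn n \<omega>"
  unfolding Sn_def by (auto intro!: sum_nonneg simp: less_imp_le)

lemma Xt_Sn: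
  assumes "\<forall>m. 0 < snd (\<omega> m)"
  shows "Xt (Sn k \<omega>) \<omega> = fst (\<omega> k)"
proof -
  have "(LEAST n. Sn k \<omega> < Sn (Suc n) \<omega>) = k"
  proof (rule Least_equality)
    show "Sn k \<omega> < Sn (Suc k) \<omega>" using assms by (simp add: Sn_Suc)
    show "k \<le> n" if "Sn k \<omega> < Sn (Suc n) \<omega>" for n
      using that Sn_mono[OF assms, of "Suc n" k] by linarith
  qed
  then show ?thesis by (simp add: Xt_def)
qed

definition hist_path :: "nat \<Rightarrow> (nat \<Rightarrow> 'e \<times> real) \<times> 'e \<Rightarrow> nat \<Rightarrow> 'e \<times> real" where
  "hist_path n y = (\<lambda>m. if m < n then fst y m else (snd y, 0))"

lemma measurable_hist_path [measurable]:
  "hist_path n \<in> measurable (Hist n) (Omega :: (nat \<Rightarrow> 'e::polish_space \<times> real) measure)"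
  unfolding Omega_def
proof (rule measurable_PiM_single')
  show "(\<lambda>y. hist_path n y m) \<in> measurable (Hist n) (borel \<Otimes>\<^sub>M borel)" for m
    by (cases "m < n") (simp_all add: hist_path_def Hist_def)
qed (auto simp: space_pair_measure)

lemma hist_path_Yn:
  "m < n \<Longrightarrow> hist_path n (Yn n \<omega>) m = \<omega> m"
  "fst (hist_path n (Yn n \<omega>) n) = fst (\<omega> n)"
  by (auto simp: hist_path_def Yn_def)

lemma Sn_hist_path_Yn: "Sn n (hist_path n (Yn n \<omega>)) = Sn n \<omega>"
  unfolding Sn_def by (rule sum.cong) (auto simp: hist_path_Yn)

lemma semi_Markov_kernel_measurable:
  "semi_Markov_kernel Q \<Longrightarrow> 0 \<le> t \<Longrightarrow> B \<in> sets borel \<Longrightarrow>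
    (\<lambda>x. measure (Q t x) B) \<in> borel_measurable borel"
  unfolding semi_Markov_kernel_def by blast

lemma semi_Markov_kernel_at_0: "semi_Markov_kernel Q \<Longrightarrow> measure (Q 0 x) UNIV = 0"
  unfolding semi_Markov_kernel_def by simp

lemma exp_minus_le_indicator:
  fixes t \<delta> :: real
  assumes "0 \<le> t"
  shows "exp (- t) \<le> exp (- \<delta>) + (1 - exp (- \<delta>)) * indicator {..\<delta>} t"
  using assms by (cases "t \<le> \<delta>") auto

locale smp_law =
  fixes Q :: "real \<Rightarrow> 'e::polish_space \<Rightarrow> 'e measure" and x0 :: 'e
    and P :: "(nat \<Rightarrow> 'e \<times> real) measure"
  assumes kernel: "semi_Markov_kernel Q" and law: "is_Px Q x0 P"
begin

sublocale prob_space P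
  using law by (simp add: is_Px_def)

lemma sets_P: "sets P = sets Omega"
  using law by (simp add: is_Px_def)

lemma space_P [simp]: "space P = UNIV"
  using sets_eq_imp_space_eq[OF sets_P] by simp

lemma measurable_P: "measurable P N = measurable Omega N"
  by (rule measurable_cong_sets[OF sets_P refl])

lemma AE_initial: "AE \<omega> in P. fst (\<omega> 0) = x0"
  using law by (simp add: is_Px_def)

lemma emeasure_transition:
  assumes "0 \<le> t" "B \<in> sets borel" "D \<in> sets (Hist n)"
  shows "emeasure P {\<omega>. Yn n \<omega> \<in> D \<and> snd (\<omega> n) \<le> t \<and> fst (\<omega> (Suc n)) \<in> B}
    = (\<integral>\<^sup>+ \<omega>. indicator {\<omega>. Yn n \<omega> \<in> D} \<omega> * ennreal (measure (Q t (fst (\<omega> n))) B) \<partial>P)"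
  using law assms by (simp add: is_Px_def)

lemma distr_density_transition:
  assumes t: "0 \<le> t" and B[measurable]: "B \<in> sets borel"
  shows "distr (density P (indicator {\<omega>. snd (\<omega> n) \<le> t \<and> fst (\<omega> (Suc n)) \<in> B})) (Hist n) (Yn n)
       = distr (density P (\<lambda>\<omega>. ennreal (measure (Q t (fst (\<omega> n))) B))) (Hist n) (Yn n)"
    (is "distr (density P (indicator ?A)) _ _ = distr (density P ?q) _ _")
proof (rule measure_eqI)
  have [measurable]: "(\<lambda>x. measure (Q t x) B) \<in> borel_measurable borel"
    using semi_Markov_kernel_measurable[OF kernel t B] .
  have [measurable]: "?A \<in> sets Omega"
    by (rule sets_Omega_Collect) measurable
  fix D assume "D \<in> sets (distr (density P (indicator ?A)) (Hist n) (Yn n))"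
  then have D[measurable]: "D \<in> sets (Hist n)" by simp
  have [measurable]: "Yn n -` D \<in> sets Omega"
    using measurable_sets[OF measurable_Yn D] by simp
  have Ds: "{\<omega>. Yn n \<omega> \<in> D \<and> snd (\<omega> n) \<le> t \<and> fst (\<omega> (Suc n)) \<in> B} \<in> sets P"
    unfolding sets_P by (rule sets_Omega_Collect) measurable
  have "emeasure (distr (density P (indicator ?A)) (Hist n) (Yn n)) D
      = (\<integral>\<^sup>+\<omega>. indicator ?A \<omega> * indicator (Yn n -` D) \<omega> \<partial>P)"
    by (simp add: emeasure_distr measurable_P emeasure_density sets_P)
  also have "\<dots> = emeasure P {\<omega>. Yn n \<omega> \<in> D \<and> snd (\<omega> n) \<le> t \<and> fst (\<omega> (Suc n)) \<in> B}"
    unfolding nn_integral_indicator[OF Ds, symmetric]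
    by (rule nn_integral_cong) (auto split: split_indicator)
  also have "\<dots> = (\<integral>\<^sup>+ \<omega>. indicator {\<omega>. Yn n \<omega> \<in> D} \<omega> * ?q \<omega> \<partial>P)"
    by (rule emeasure_transition[OF t B D])
  also have "\<dots> = emeasure (distr (density P ?q) (Hist n) (Yn n)) D"
  proof -
    have "?q \<in> borel_measurable P" unfolding measurable_P by measurable
    moreover have "{\<omega>. Yn n \<omega> \<in> D} \<in> sets P" unfolding sets_P by (rule sets_Omega_Collect) measurable
    ultimately show ?thesis
      by (simp add: emeasure_distr measurable_P emeasure_density sets_P mult.commute vimage_def)
  qed
  finally show "emeasure (distr (density P (indicator ?A)) (Hist n) (Yn n)) D
      = emeasure (distr (density P ?q) (Hist n) (Yn n)) D" .
qed simp

lemma nn_integral_transition: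
  assumes f[measurable]: "f \<in> borel_measurable Omega"
    and f_hist: "\<And>\<omega>. f \<omega> = f (hist_path n (Yn n \<omega>))"
    and t: "0 \<le> t" and B[measurable]: "B \<in> sets borel"
  shows "(\<integral>\<^sup>+\<omega>. f \<omega> * indicator {\<omega>. snd (\<omega> n) \<le> t \<and> fst (\<omega> (Suc n)) \<in> B} \<omega> \<partial>P)
       = (\<integral>\<^sup>+\<omega>. f \<omega> * ennreal (measure (Q t (fst (\<omega> n))) B) \<partial>P)"
proof -
  let ?A = "{\<omega>. snd (\<omega> n) \<le> t \<and> fst (\<omega> (Suc n)) \<in> B}"
  let ?q = "\<lambda>\<omega>. ennreal (measure (Q t (fst (\<omega> n))) B)"
  have [measurable]: "(\<lambda>x. measure (Q t x) B) \<in> borel_measurable borel"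
    using semi_Markov_kernel_measurable[OF kernel t B] .
  have [measurable]: "?A \<in> sets Omega"
    by (rule sets_Omega_Collect) measurable
  have "(\<integral>\<^sup>+\<omega>. f \<omega> * indicator ?A \<omega> \<partial>P) = (\<integral>\<^sup>+\<omega>. indicator ?A \<omega> * f (hist_path n (Yn n \<omega>)) \<partial>P)"
    by (subst f_hist) (simp add: mult.commute)
  also have "\<dots> = (\<integral>\<^sup>+y. f (hist_path n y) \<partial>distr (density P (indicator ?A)) (Hist n) (Yn n))"
    by (simp add: nn_integral_distr measurable_P nn_integral_density)
  also have "\<dots> = (\<integral>\<^sup>+y. f (hist_path n y) \<partial>distr (density P ?q) (Hist n) (Yn n))"
    by (simp add: distr_density_transition[OF t B])
  also have "\<dots> = (\<integral>\<^sup>+\<omega>. ?q \<omega> * f (hist_path n (Yn n \<omega>)) \<partial>P)"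
    by (simp add: nn_integral_distr measurable_P nn_integral_density)
  also have "\<dots> = (\<integral>\<^sup>+\<omega>. f \<omega> * ?q \<omega> \<partial>P)"
    by (subst (2) f_hist) (simp add: mult.commute)
  finally show ?thesis .
qed

lemma AE_sojourn_pos: "AE \<omega> in P. 0 < snd (\<omega> n)"
proof (rule AE_I')
  let ?N = "{\<omega>. Yn n \<omega> \<in> space (Hist n) \<and> snd (\<omega> n) \<le> 0 \<and> fst (\<omega> (Suc n)) \<in> UNIV}"
  have "?N \<in> sets P"
    unfolding sets_P by (rule sets_Omega_Collect) measurable
  moreover have "emeasure P ?N = 0"
    by (subst emeasure_transition) (auto simp: semi_Markov_kernel_at_0[OF kernel])
  ultimately show "?N \<in> null_sets P" by auto
  show "{\<omega> \<in> space P. \<not> 0 < snd (\<omega> n)} \<subseteq> ?N"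
    using measurable_space[OF measurable_Yn] by auto
qed

lemma AE_all_sojourn_pos: "AE \<omega> in P. \<forall>n. 0 < snd (\<omega> n)"
  using AE_sojourn_pos by (simp add: AE_all_countable)

lemma AE_exp_Sn_Suc_le:
  fixes \<delta> :: real
  assumes "0 \<le> \<delta>"
  shows "AE \<omega> in P. ennreal (exp (- Sn (Suc n) \<omega>)) \<le> ennreal (exp (- \<delta>)) * exp (- Sn n \<omega>)
    + ennreal (1 - exp (- \<delta>)) * (ennreal (exp (- Sn n \<omega>)) * indicator {\<omega>. snd (\<omega> n) \<le> \<delta> \<and> fst (\<omega> (Suc n)) \<in> UNIV} \<omega>)"
  using AE_sojourn_pos[of n]
proof eventually_elim
  case (elim \<omega>)
  let ?a = "exp (- \<delta>)" and ?A = "{\<omega>. snd (\<omega> n) \<le> \<delta> \<and> fst (\<omega> (Suc n)) \<in> UNIV}"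
  have "exp (- Sn (Suc n) \<omega>) = exp (- snd (\<omega> n)) * exp (- Sn n \<omega>)"
    by (simp add: Sn_Suc flip: exp_add)
  also have "\<dots> \<le> (?a + (1 - ?a) * indicator {..\<delta>} (snd (\<omega> n))) * exp (- Sn n \<omega>)"
    using elim by (intro mult_right_mono exp_minus_le_indicator) auto
  also have "\<dots> = ?a * exp (- Sn n \<omega>) + (1 - ?a) * (exp (- Sn n \<omega>) * indicator ?A \<omega>)"
    by (simp add: algebra_simps split: split_indicator)
  finally have "ennreal (exp (- Sn (Suc n) \<omega>))
      \<le> ennreal (?a * exp (- Sn n \<omega>) + (1 - ?a) * (exp (- Sn n \<omega>) * indicator ?A \<omega>))"
    by (rule ennreal_leI)
  also have "\<dots> = ennreal ?a * exp (- Sn n \<omega>) + ennreal (1 - ?a) * (ennreal (exp (- Sn n \<omega>)) * indicator ?A \<omega>)"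
    using assms by (simp add: ennreal_mult split: split_indicator)
  finally show ?case .
qed

lemma nn_integral_exp_Sn_short_sojourn_le:
  assumes \<delta>: "0 \<le> \<delta>" and small_mass: "\<forall>x. measure (Q \<delta> x) UNIV \<le> 1 - \<epsilon>"
  shows "(\<integral>\<^sup>+\<omega>. ennreal (exp (- Sn n \<omega>)) * indicator {\<omega>. snd (\<omega> n) \<le> \<delta> \<and> fst (\<omega> (Suc n)) \<in> UNIV} \<omega> \<partial>P)
    \<le> ennreal (1 - \<epsilon>) * (\<integral>\<^sup>+\<omega>. exp (- Sn n \<omega>) \<partial>P)"
proof -
  have "(\<integral>\<^sup>+\<omega>. ennreal (exp (- Sn n \<omega>)) * indicator {\<omega>. snd (\<omega> n) \<le> \<delta> \<and> fst (\<omega> (Suc n)) \<in> UNIV} \<omega> \<partial>P)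
      = (\<integral>\<^sup>+\<omega>. exp (- Sn n \<omega>) * ennreal (measure (Q \<delta> (fst (\<omega> n))) UNIV) \<partial>P)"
    by (rule nn_integral_transition) (use \<delta> in \<open>auto simp: Sn_hist_path_Yn\<close>)
  also have "\<dots> \<le> (\<integral>\<^sup>+\<omega>. exp (- Sn n \<omega>) * ennreal (1 - \<epsilon>) \<partial>P)"
    by (intro nn_integral_mono mult_left_mono ennreal_leI) (auto simp: small_mass)
  also have "\<dots> = ennreal (1 - \<epsilon>) * (\<integral>\<^sup>+\<omega>. exp (- Sn n \<omega>) \<partial>P)"
    by (subst nn_integral_multc) (auto simp: measurable_P mult.commute)
  finally show ?thesis .
qed

lemma nn_integral_exp_Sn_Suc_le:
  assumes \<delta>: "0 \<le> \<delta>" and small_mass: "\<forall>x. measure (Q \<delta> x) UNIV \<le> 1 - \<epsilon>"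
  shows "(\<integral>\<^sup>+\<omega>. exp (- Sn (Suc n) \<omega>) \<partial>P)
     \<le> ennreal (exp (- \<delta>) + (1 - exp (- \<delta>)) * (1 - \<epsilon>)) * (\<integral>\<^sup>+\<omega>. exp (- Sn n \<omega>) \<partial>P)"
proof -
  let ?a = "exp (- \<delta>)" and ?E = "\<integral>\<^sup>+\<omega>. exp (- Sn n \<omega>) \<partial>P"
  let ?A = "{\<omega>. snd (\<omega> n) \<le> \<delta> \<and> fst (\<omega> (Suc n)) \<in> UNIV}"
  have a: "0 \<le> 1 - ?a" using \<delta> by simp
  have \<epsilon>: "0 \<le> 1 - \<epsilon>" using small_mass measure_nonneg order_trans by metis
  have [measurable]: "?A \<in> sets Omega"
    by (rule sets_Omega_Collect) measurable
  have "(\<integral>\<^sup>+\<omega>. exp (- Sn (Suc n) \<omega>) \<partial>P)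
      \<le> (\<integral>\<^sup>+\<omega>. ennreal ?a * exp (- Sn n \<omega>) + ennreal (1 - ?a) * (ennreal (exp (- Sn n \<omega>)) * indicator ?A \<omega>) \<partial>P)"
    by (rule nn_integral_mono_AE[OF AE_exp_Sn_Suc_le[OF \<delta>]])
  also have "\<dots> = ennreal ?a * ?E + ennreal (1 - ?a) * (\<integral>\<^sup>+\<omega>. ennreal (exp (- Sn n \<omega>)) * indicator ?A \<omega> \<partial>P)"
    by (subst nn_integral_add) (auto simp: measurable_P nn_integral_cmult)
  also have "\<dots> \<le> ennreal ?a * ?E + ennreal (1 - ?a) * (ennreal (1 - \<epsilon>) * ?E)"
    using nn_integral_exp_Sn_short_sojourn_le[OF \<delta> small_mass] by (intro add_left_mono mult_left_mono) auto
  also have "\<dots> = ennreal (?a + (1 - ?a) * (1 - \<epsilon>)) * ?E"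
    using a \<epsilon> by (simp add: ennreal_mult distrib_right mult.assoc)
  finally show ?thesis .
qed

lemma nn_integral_exp_Sn_le:
  assumes \<delta>: "0 \<le> \<delta>" and small_mass: "\<forall>x. measure (Q \<delta> x) UNIV \<le> 1 - \<epsilon>"
  shows "(\<integral>\<^sup>+\<omega>. exp (- Sn n \<omega>) \<partial>P) \<le> ennreal ((exp (- \<delta>) + (1 - exp (- \<delta>)) * (1 - \<epsilon>)) ^ n)"
proof (induction n)
  case 0
  show ?case using emeasure_space_1 by simp
next
  case (Suc n)
  let ?r = "exp (- \<delta>) + (1 - exp (- \<delta>)) * (1 - \<epsilon>)"
  have "0 \<le> 1 - \<epsilon>" using small_mass measure_nonneg order_trans by metis
  then have r: "0 \<le> ?r" using \<delta> by simp
  have "(\<integral>\<^sup>+\<omega>. exp (- Sn (Suc n) \<omega>) \<partial>P) \<le> ennreal ?r * (\<integral>\<^sup>+\<omega>. exp (- Sn n \<omega>) \<partial>P)"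
    by (rule nn_integral_exp_Sn_Suc_le[OF \<delta> small_mass])
  also have "\<dots> \<le> ennreal ?r * ennreal (?r ^ n)"
    by (intro mult_left_mono Suc.IH) auto
  also have "\<dots> = ennreal (?r ^ Suc n)"
    using r by (simp add: ennreal_mult[symmetric])
  finally show ?case .
qed

lemma emeasure_Sn_bounded_le:
  assumes \<delta>: "0 \<le> \<delta>" and small_mass: "\<forall>x. measure (Q \<delta> x) UNIV \<le> 1 - \<epsilon>"
  shows "emeasure P {\<omega>. \<forall>n. Sn n \<omega> < s} \<le> ennreal (exp s * (exp (- \<delta>) + (1 - exp (- \<delta>)) * (1 - \<epsilon>)) ^ n)"
proof -
  let ?r = "exp (- \<delta>) + (1 - exp (- \<delta>)) * (1 - \<epsilon>)"
  have "0 \<le> 1 - \<epsilon>" using small_mass measure_nonneg order_trans by metis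
  then have r: "0 \<le> ?r" using \<delta> by simp
  have N: "{\<omega>. \<forall>n. Sn n \<omega> < s} \<in> sets P"
    unfolding sets_P by (rule sets_Omega_Collect) measurable
  have "emeasure P {\<omega>. \<forall>n. Sn n \<omega> < s} \<le> (\<integral>\<^sup>+\<omega>. ennreal (exp s) * exp (- Sn n \<omega>) \<partial>P)"
    unfolding nn_integral_indicator[OF N, symmetric]
    by (intro nn_integral_mono)
      (auto simp: ennreal_mult[symmetric] less_imp_le simp flip: exp_add split: split_indicator)
  also have "\<dots> = ennreal (exp s) * (\<integral>\<^sup>+\<omega>. exp (- Sn n \<omega>) \<partial>P)"
    by (subst nn_integral_cmult) (auto simp: measurable_P)
  also have "\<dots> \<le> ennreal (exp s) * ennreal (?r ^ n)"
    by (intro mult_left_mono nn_integral_exp_Sn_le[OF \<delta> small_mass]) auto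
  finally show ?thesis
    using r by (simp add: ennreal_mult)
qed

lemma AE_Sn_unbounded:
  assumes "\<exists>\<delta>>0. \<exists>\<epsilon>>0. \<forall>x. measure (Q \<delta> x) UNIV \<le> 1 - \<epsilon>"
  shows "AE \<omega> in P. \<exists>n. s \<le> Sn n \<omega>"
proof -
  obtain \<delta> \<epsilon> where \<delta>: "0 < \<delta>" and \<epsilon>: "0 < \<epsilon>"
    and small_mass: "\<forall>x. measure (Q \<delta> x) UNIV \<le> 1 - \<epsilon>"
    using assms by blast
  define r where "r = exp (- \<delta>) + (1 - exp (- \<delta>)) * (1 - \<epsilon>)"
  have "0 \<le> 1 - \<epsilon>" using small_mass measure_nonneg order_trans by metis
  then have r0: "0 \<le> r" using \<delta> by (simp add: r_def)
  have "r = 1 - (1 - exp (- \<delta>)) * \<epsilon>" by (simp add: r_def algebra_simps)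
  moreover have "0 < (1 - exp (- \<delta>)) * \<epsilon>" using \<delta> \<epsilon> by simp
  ultimately have r1: "r < 1" by linarith
  let ?N = "{\<omega>. \<forall>n. Sn n \<omega> < s}"
  have N: "?N \<in> sets P"
    unfolding sets_P by (rule sets_Omega_Collect) measurable
  have bound: "measure P ?N \<le> exp s * r ^ n" for n
    using emeasure_Sn_bounded_le[OF _ small_mass, where s=s and n=n] \<delta> r0
    by (simp add: r_def emeasure_eq_measure)
  have "(\<lambda>n. exp s * r ^ n) \<longlonglongrightarrow> 0"
    using tendsto_mult_right_zero[OF LIMSEQ_power_zero[of r]] r0 r1 by simp
  then have "measure P ?N \<le> 0"
    by (rule LIMSEQ_le_const) (use bound in auto)
  then have "?N \<in> null_sets P"
    using N measure_nonneg[of P ?N] by (simp add: emeasure_eq_measure null_sets_def)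
  then show ?thesis
    by (rule AE_I') (auto simp: not_le)
qed

end

section \<open>The path space of the SMDP\<close>

lemma space_Ehat [simp]: "space Ehat = UNIV"
  by (simp add: Ehat_def space_measure_of_conv)

lemma sets_Ehat:
  "sets Ehat = sigma_sets UNIV ({Some ` B | B. B \<in> sets (borel :: 'e::polish_space measure)} \<union> {{None}})"
  unfolding Ehat_def by (rule sets_measure_of) auto

lemma UNIV_sets_Ehat [simp]: "UNIV \<in> sets Ehat"
  using sets.top[of Ehat] by simp

lemma Some_image_sets_Ehat:
  "B \<in> sets (borel :: 'e::polish_space measure) \<Longrightarrow> Some ` B \<in> sets (Ehat :: 'e option measure)"
  unfolding sets_Ehat by (rule sigma_sets.Basic) auto

lemma None_sets_Ehat [simp]: "{None} \<in> sets (Ehat :: 'e::polish_space option measure)"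
  unfolding sets_Ehat by (rule sigma_sets.Basic) auto

lemma measurable_Some_Ehat [measurable]: "Some \<in> measurable borel (Ehat :: 'e::polish_space option measure)"
  unfolding Ehat_def
proof (rule measurable_measure_of)
  fix A assume "A \<in> {Some ` B | B. B \<in> sets (borel :: 'e measure)} \<union> {{None}}"
  then consider B where "A = Some ` B" "B \<in> sets (borel :: 'e measure)" | "A = {None}"
    by blast
  then show "Some -` A \<inter> space borel \<in> sets borel"
  proof cases
    case 2
    then have "Some -` A = {}" by auto
    then show ?thesis by simp
  qed (simp add: inj_vimage_image_eq)
qed auto

lemma Some_vimage_sets_borel:
  "B \<in> sets (Ehat :: 'e::polish_space option measure) \<Longrightarrow> Some -` B \<in> sets (borel :: 'e measure)"
  using measurable_sets[OF measurable_Some_Ehat, of B] by simp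

lemma measurable_from_Ehat:
  assumes f: "(\<lambda>y. f (Some y)) \<in> measurable (borel :: 'e::polish_space measure) N"
    and None: "f None \<in> space N"
  shows "f \<in> measurable (Ehat :: 'e option measure) N"
proof (rule measurableI)
  show "f x \<in> space N" for x
    using None measurable_space[OF f] by (cases x) auto
  fix A assume A: "A \<in> sets N"
  let ?S = "Some ` ((\<lambda>y. f (Some y)) -` A \<inter> space borel)"
  have S: "?S \<in> sets Ehat"
    using Some_image_sets_Ehat[OF measurable_sets[OF f A]] .
  have "f -` A \<inter> space Ehat = (if f None \<in> A then ?S \<union> {None} else ?S)"
  proof (rule set_eqI)
    show "x \<in> f -` A \<inter> space Ehat \<longleftrightarrow> x \<in> (if f None \<in> A then ?S \<union> {None} else ?S)" for x
      by (cases x) auto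
  qed
  then show "f -` A \<inter> space Ehat \<in> sets Ehat"
    using S sets.Un[OF S None_sets_Ehat] by simp
qed

lemma space_StepM [simp]: "space StepM = UNIV"
  by (simp add: StepM_def space_pair_measure)

lemma space_Omegahat [simp]: "space Omegahat = UNIV"
  by (simp add: Omegahat_def space_PiM)

lemma space_HhatM: "space (HhatM n) = (\<Pi>\<^sub>E m\<in>{..<n}. UNIV) \<times> UNIV"
  by (simp add: HhatM_def space_pair_measure space_PiM)

lemma measurable_StepM_state [measurable]: "fst \<in> measurable StepM Ehat"
  unfolding StepM_def by measurable

lemma measurable_StepM_action [measurable]: "(\<lambda>v. fst (snd v)) \<in> measurable StepM (count_space UNIV)"
  unfolding StepM_def by measurable

lemma measurable_StepM_sojourn [measurable]: "(\<lambda>v. snd (snd v)) \<in> borel_measurable StepM"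
  unfolding StepM_def by measurable

lemma measurable_Omegahat_coord [measurable]: "(\<lambda>\<omega>. \<omega> n) \<in> measurable Omegahat StepM"
  unfolding Omegahat_def by measurable

lemma measurable_Omegahat_state [measurable]: "(\<lambda>\<omega>. fst (\<omega> n)) \<in> measurable Omegahat Ehat"
  by (rule measurable_compose[OF measurable_Omegahat_coord measurable_StepM_state])

lemma measurable_Omegahat_action [measurable]:
  "(\<lambda>\<omega>. fst (snd (\<omega> n))) \<in> measurable Omegahat (count_space UNIV)"
  by (rule measurable_compose[OF measurable_Omegahat_coord measurable_StepM_action])

lemma measurable_Omegahat_sojourn [measurable]: "(\<lambda>\<omega>. snd (snd (\<omega> n))) \<in> borel_measurable Omegahat"
  by (rule measurable_compose[OF measurable_Omegahat_coord measurable_StepM_sojourn])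

lemma sets_Omegahat_Collect: "Measurable.pred Omegahat p \<Longrightarrow> {\<omega>. p \<omega>} \<in> sets Omegahat"
  by (simp add: pred_def)

lemma measurable_Shat [measurable]: "Shat n \<in> borel_measurable Omegahat"
  unfolding Shat_def by measurable

lemma measurable_HhatM_step [measurable]:
  "m < n \<Longrightarrow> (\<lambda>hx. fst hx m) \<in> measurable (HhatM n) StepM"
  unfolding HhatM_def by measurable

lemma measurable_HhatM_state [measurable]: "snd \<in> measurable (HhatM n) Ehat"
  unfolding HhatM_def by measurable

definition Yhat :: "nat \<Rightarrow> 'e hpath \<Rightarrow> 'e hpath \<times> 'e option" where
  "Yhat n \<omega> = (restrict \<omega> {..<n}, fst (\<omega> n))"

lemma snd_Yhat [simp]: "snd (Yhat n \<omega>) = fst (\<omega> n)"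
  by (simp add: Yhat_def)

lemma measurable_Yhat [measurable]: "Yhat n \<in> measurable Omegahat (HhatM n)"
  unfolding Yhat_def HhatM_def Omegahat_def by measurable

lemma sets_Hhat [measurable]: "Hhat n \<in> sets (HhatM n)"
proof -
  have "Hhat n = {hx \<in> space (HhatM n). \<forall>m\<in>{..<n}. 0 \<le> snd (snd (fst hx m)) \<and>
      (fst (snd (fst hx m)) = 1 \<or> (fst (snd (fst hx m)) = 0 \<and> fst (fst hx m) \<noteq> None))}"
    by (auto simp: Hhat_def Aset_def split: option.split)
  also have "\<dots> \<in> sets (HhatM n)"
  proof -
    have [measurable]: "Measurable.pred Ehat (\<lambda>x. x \<noteq> None)"
      by (rule measurable_from_Ehat) auto
    show ?thesis by measurable
  qed
  finally show ?thesis .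
qed

definition hist_duration :: "nat \<Rightarrow> 'e hpath \<times> 'e option \<Rightarrow> real" where
  "hist_duration n hx = (\<Sum>m<n. snd (snd (fst hx m)))"

lemma measurable_hist_duration [measurable]: "hist_duration n \<in> borel_measurable (HhatM n)"
  unfolding hist_duration_def by measurable

lemma hist_duration_Yhat [simp]: "hist_duration n (Yhat n \<omega>) = Shat n \<omega>"
  by (simp add: hist_duration_def Yhat_def Shat_def)

text \<open>Outside of \<^term>\<open>Hhat n\<close>, where \<^const>\<open>det_policy\<close> gives no measurability,
  the action is set to 0.\<close>
definition policy_action ::
    "(nat \<Rightarrow> real \<Rightarrow> 'e::polish_space hpath \<Rightarrow> 'e option \<Rightarrow> nat) \<Rightarrow> real \<Rightarrow> nat \<Rightarrow> 'e hpath \<times> 'e option \<Rightarrow> nat"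
  where "policy_action d s n hx = (if hx \<in> Hhat n then d n (s - hist_duration n hx) (fst hx) (snd hx) else 0)"

lemma det_policy_measurable:
  "det_policy d \<Longrightarrow> (\<lambda>(s, hx). d n s (fst hx) (snd hx))
     \<in> measurable (restrict_space (borel \<Otimes>\<^sub>M HhatM n) (UNIV \<times> Hhat n)) (count_space UNIV)"
  unfolding det_policy_def by blast

lemma measurable_policy_action:
  assumes "det_policy d"
  shows "policy_action d s n \<in> measurable (HhatM n) (count_space UNIV)"
proof -
  have "(\<lambda>hx. (s - hist_duration n hx, hx)) \<in> measurable (restrict_space (HhatM n) (Hhat n))
      (restrict_space (borel \<Otimes>\<^sub>M HhatM n) (UNIV \<times> Hhat n))"
    by (rule measurable_restrict_space3) auto
  from measurable_compose[OF this det_policy_measurable[OF assms]]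
  have "(\<lambda>hx. d n (s - hist_duration n hx) (fst hx) (snd hx))
      \<in> measurable (restrict_space (HhatM n) (Hhat n)) (count_space UNIV)"
    by simp
  moreover have "{hx \<in> space (HhatM n). hx \<in> Hhat n} \<in> sets (HhatM n)"
    using sets.sets_into_space[OF sets_Hhat] by (simp add: Int_absorb1 Collect_mem_eq)
  ultimately show ?thesis
    unfolding policy_action_def[abs_def]
    by (subst measurable_If_restrict_space_iff) auto
qed

lemma Qhat_at_0: "semi_Markov_kernel Q \<Longrightarrow> 0 \<le> T \<Longrightarrow> Qhat Q T 0 UNIV x a = 0"
  by (cases x) (auto simp: Qhat_def semi_Markov_kernel_at_0)

lemma measurable_Qhat:
  assumes Q: "semi_Markov_kernel Q" and t: "0 \<le> t" and B: "B \<in> sets Ehat"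
  shows "(\<lambda>p. Qhat Q T t B (snd (fst p)) (snd p)) \<in> borel_measurable (HhatM n \<Otimes>\<^sub>M count_space UNIV)"
proof -
  have "(\<lambda>y. measure (Q t y) (Some -` B)) \<in> borel_measurable borel"
    by (rule semi_Markov_kernel_measurable[OF Q t Some_vimage_sets_borel[OF B]])
  then have [measurable]: "(\<lambda>x. Qhat Q T t B x a) \<in> borel_measurable Ehat" for a
    by (intro measurable_from_Ehat) (simp_all add: Qhat_def)
  show ?thesis
    by (rule measurable_compose_countable[where f="\<lambda>a p. Qhat Q T t B (snd (fst p)) a"]) measurable
qed

lemma measurable_Qhat_Omegahat:
  assumes "semi_Markov_kernel Q" "0 \<le> t" "B \<in> sets Ehat"
  shows "(\<lambda>\<omega>. Qhat Q T t B (fst (\<omega> n)) (fst (snd (\<omega> n)))) \<in> borel_measurable Omegahat"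
  using measurable_compose[of "\<lambda>\<omega>. (Yhat n \<omega>, fst (snd (\<omega> n)))", OF _ measurable_Qhat[OF assms]]
  by simp

section \<open>Uniqueness of the SMDP law\<close>

lemma sets_borel_pair_atMost:
  fixes E :: "'b measure"
  assumes E: "space E = UNIV"
  shows "sets ((borel :: real measure) \<Otimes>\<^sub>M E) =
    sets (sigma UNIV {A \<times> B | A B. A \<in> range atMost \<and> B \<in> sets E})"
proof -
  have "sets (borel :: real measure) = sets (sigma UNIV (range atMost))"
    by (subst borel_eq_atMost) simp
  moreover have "sets E = sets (sigma UNIV (sets E))"
    using E sets.sigma_sets_eq[of E] by (simp add: sets_measure_of_conv)
  ultimately have "sets ((borel :: real measure) \<Otimes>\<^sub>M E)
      = sets (sigma UNIV (range atMost) \<Otimes>\<^sub>M sigma UNIV (sets E))"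
    by (rule sets_pair_measure_cong)
  also have "sigma UNIV (range atMost) \<Otimes>\<^sub>M sigma UNIV (sets E)
      = sigma (UNIV \<times> UNIV) {A \<times> B | A B. A \<in> range (atMost :: real \<Rightarrow> real set) \<and> B \<in> sets E}"
  proof -
    have "\<exists>C\<subseteq>range (atMost :: real \<Rightarrow> real set). countable C \<and> UNIV = \<Union>C"
      by (intro exI[of _ "range (\<lambda>i::nat. {..real i})"]) (auto intro: real_arch_simple)
    moreover have "\<exists>C\<subseteq>sets E. countable C \<and> UNIV = \<Union>C"
      using E sets.top[of E] by (intro exI[of _ "{UNIV}"]) auto
    ultimately show ?thesis
      using E sets.space_closed[of E] by (intro sigma_prod) auto
  qed
  finally show ?thesis by simp
qed

lemma sets_pair_pair_atMost:
  fixes H :: "'h measure" and E :: "'b measure"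
  assumes E: "space E = UNIV"
  shows "sets (H \<Otimes>\<^sub>M ((borel :: real measure) \<Otimes>\<^sub>M E)) =
    sigma_sets (space H \<times> UNIV) {D \<times> ({..a} \<times> B) | D a B. D \<in> sets H \<and> B \<in> sets E}"
proof -
  let ?G = "{A \<times> B | A B. A \<in> range (atMost :: real \<Rightarrow> real set) \<and> B \<in> sets E}"
  have "sets H = sets (sigma (space H) (sets H))"
    using sets.sigma_sets_eq[of H] sets.space_closed[of H] by (simp add: sets_measure_of)
  then have "sets (H \<Otimes>\<^sub>M (borel \<Otimes>\<^sub>M E)) = sets (sigma (space H) (sets H) \<Otimes>\<^sub>M sigma UNIV ?G)"
    by (rule sets_pair_measure_cong[OF _ sets_borel_pair_atMost[OF E]])
  also have "sigma (space H) (sets H) \<Otimes>\<^sub>M sigma UNIV ?G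
      = sigma (space H \<times> UNIV) {D \<times> C | D C. D \<in> sets H \<and> C \<in> ?G}"
  proof (rule sigma_prod)
    show "\<exists>C\<subseteq>sets H. countable C \<and> space H = \<Union>C"
      by (intro exI[of _ "{space H}"]) auto
    show "\<exists>C\<subseteq>?G. countable C \<and> UNIV = \<Union>C"
      using E sets.top[of E]
      by (intro exI[of _ "range (\<lambda>i::nat. {..real i} \<times> UNIV)"])
        (auto intro: real_arch_simple)
  qed (use sets.space_closed in auto)
  also have "{D \<times> C | D C. D \<in> sets H \<and> C \<in> ?G} = {D \<times> ({..a} \<times> B) | D a B. D \<in> sets H \<and> B \<in> sets E}"
    by blast
  finally show ?thesis
    by (subst (asm) sets_measure_of) (use sets.space_closed in auto)
qed

lemma measure_pair_pair_atMost_eqI: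
  fixes M N :: "('h \<times> real \<times> 'b) measure" and E :: "'b measure"
  assumes E: "space E = UNIV"
    and sets: "sets M = sets (H \<Otimes>\<^sub>M (borel \<Otimes>\<^sub>M E))" "sets N = sets (H \<Otimes>\<^sub>M (borel \<Otimes>\<^sub>M E))"
    and finite: "finite_measure M"
    and eq: "\<And>D t B. D \<in> sets H \<Longrightarrow> B \<in> sets E \<Longrightarrow> emeasure M (D \<times> ({..t} \<times> B)) = emeasure N (D \<times> ({..t} \<times> B))"
  shows "M = N"
proof -
  let ?G = "{D \<times> ({..t::real} \<times> B) | D t B. D \<in> sets H \<and> B \<in> sets E}"
  have gen: "sets M = sigma_sets (space H \<times> UNIV) ?G" "sets N = sigma_sets (space H \<times> UNIV) ?G"
    using sets sets_pair_pair_atMost[OF E] by simp_all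
  show ?thesis
  proof (rule measure_eqI_generator_eq[OF _ _ _ gen, where A="\<lambda>i. space H \<times> ({..real i} \<times> UNIV)"])
    show "Int_stable ?G"
    proof (rule Int_stableI)
      fix X Y assume "X \<in> ?G" "Y \<in> ?G"
      then obtain D t B D' t' B' where "X = D \<times> ({..t::real} \<times> B)" "D \<in> sets H" "B \<in> sets E"
        and "Y = D' \<times> ({..t'} \<times> B')" "D' \<in> sets H" "B' \<in> sets E"
        by blast
      moreover have "X \<inter> Y = (D \<inter> D') \<times> ({..min t t'} \<times> (B \<inter> B'))"
        using calculation by auto
      ultimately show "X \<inter> Y \<in> ?G" by blast
    qed
    show "?G \<subseteq> Pow (space H \<times> UNIV)"
    proof
      fix X assume "X \<in> ?G"
      then obtain D t B where "X = D \<times> ({..t::real} \<times> B)" "D \<in> sets H" by blast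
      then show "X \<in> Pow (space H \<times> UNIV)"
        using sets.sets_into_space[of D H] by auto
    qed
    show "range (\<lambda>i. space H \<times> ({..real i} \<times> UNIV)) \<subseteq> ?G"
      using E sets.top[of E] by (blast intro: sets.top)
    show "(\<Union>i. space H \<times> ({..real i} \<times> UNIV)) = space H \<times> UNIV"
      by (auto intro: real_arch_simple)
    show "emeasure M (space H \<times> ({..real i} \<times> UNIV)) \<noteq> \<infinity>" for i
      using finite_measure.emeasure_finite[OF finite] by simp
    show "emeasure M X = emeasure N X" if "X \<in> ?G" for X
      using that eq by blast
  qed
qed

definition step_data :: "nat \<Rightarrow> 'e hpath \<Rightarrow> (('e hpath \<times> 'e option) \<times> nat) \<times> real \<times> 'e option" where
  "step_data n \<omega> = ((Yhat n \<omega>, fst (snd (\<omega> n))), (snd (snd (\<omega> n)), fst (\<omega> (Suc n))))"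

definition StepDataM :: "nat \<Rightarrow> ((('e::polish_space hpath \<times> 'e option) \<times> nat) \<times> real \<times> 'e option) measure" where
  "StepDataM n = (HhatM n \<Otimes>\<^sub>M count_space UNIV) \<Otimes>\<^sub>M (borel \<Otimes>\<^sub>M Ehat)"

definition hist_extend :: "nat \<Rightarrow> (('e hpath \<times> 'e option) \<times> nat) \<times> real \<times> 'e option \<Rightarrow> 'e hpath \<times> 'e option" where
  "hist_extend n z = (case z of (((h, x), a), t, y) \<Rightarrow> (h(n := (x, a, t)), y))"

lemma measurable_step_data [measurable]: "step_data n \<in> measurable Omegahat (StepDataM n)"
  unfolding step_data_def StepDataM_def by measurable

lemma Yhat_Suc: "Yhat (Suc n) \<omega> = hist_extend n (step_data n \<omega>)"
  by (auto simp: Yhat_def hist_extend_def step_data_def restrict_def fun_eq_iff)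

lemma measurable_hist_extend [measurable]: "hist_extend n \<in> measurable (StepDataM n) (HhatM (Suc n))"
proof -
  have "(\<lambda>z. (fst (fst (fst z)))(n := (snd (fst (fst z)), snd (fst z), fst (snd z))))
      \<in> measurable (StepDataM n) (\<Pi>\<^sub>M m\<in>{..<Suc n}. StepM)"
  proof (rule measurable_PiM_single')
    show "(\<lambda>z. ((fst (fst (fst z)))(n := (snd (fst (fst z)), snd (fst z), fst (snd z)))) m)
        \<in> measurable (StepDataM n) StepM" if "m \<in> {..<Suc n}" for m
    proof (cases "m = n")
      case True
      then show ?thesis unfolding StepDataM_def StepM_def by simp measurable
    next
      case False
      with that have "m < n" by simp
      then show ?thesis unfolding StepDataM_def by simp measurable
    qed
    show "(\<lambda>z. (fst (fst (fst z)))(n := (snd (fst (fst z)), snd (fst z), fst (snd z))))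
        \<in> space (StepDataM n) \<rightarrow> (\<Pi>\<^sub>E i\<in>{..<Suc n}. space StepM)"
      by (auto simp: StepDataM_def space_pair_measure space_HhatM PiE_def extensional_def)
  qed
  moreover have "(\<lambda>z. snd (snd z)) \<in> measurable (StepDataM n) Ehat"
    unfolding StepDataM_def by measurable
  ultimately have meas: "(\<lambda>z. ((fst (fst (fst z)))(n := (snd (fst (fst z)), snd (fst z), fst (snd z))), snd (snd z)))
      \<in> measurable (StepDataM n) ((\<Pi>\<^sub>M m\<in>{..<Suc n}. StepM) \<Otimes>\<^sub>M Ehat)"
    by (rule measurable_Pair)
  have eq: "hist_extend n
      = (\<lambda>z. ((fst (fst (fst z)))(n := (snd (fst (fst z)), snd (fst z), fst (snd z))), snd (snd z)))"
    by (auto simp: hist_extend_def fun_eq_iff split: prod.split)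
  show ?thesis
    unfolding eq HhatM_def[of "Suc n"] by (rule meas)
qed

locale smdp_law =
  fixes Q :: "real \<Rightarrow> 'e::polish_space \<Rightarrow> 'e measure" and T :: real
    and d :: "nat \<Rightarrow> real \<Rightarrow> 'e hpath \<Rightarrow> 'e option \<Rightarrow> nat" and s :: real and x0 :: 'e
    and M :: "'e hpath measure"
  assumes kernel: "semi_Markov_kernel Q" and policy: "det_policy d" and T: "0 \<le> T"
    and law: "is_Phat Q T d s x0 M"
begin

sublocale prob_space M
  using law by (simp add: is_Phat_def)

lemma sets_M: "sets M = sets Omegahat"
  using law by (simp add: is_Phat_def)

lemma space_M [simp]: "space M = UNIV"
  using sets_eq_imp_space_eq[OF sets_M] by simp

lemma measurable_M: "measurable M N = measurable Omegahat N"
  by (rule measurable_cong_sets[OF sets_M refl])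

lemma emeasure_transition:
  assumes "0 \<le> t" "B \<in> sets Ehat" "D \<in> sets (HhatM n \<Otimes>\<^sub>M count_space UNIV)"
  shows "emeasure M {\<omega>. (Yhat n \<omega>, fst (snd (\<omega> n))) \<in> D \<and> snd (snd (\<omega> n)) \<le> t \<and> fst (\<omega> (Suc n)) \<in> B}
    = (\<integral>\<^sup>+ \<omega>. indicator D (Yhat n \<omega>, fst (snd (\<omega> n)))
          * ennreal (Qhat Q T t B (fst (\<omega> n)) (fst (snd (\<omega> n)))) \<partial>M)"
proof -
  have "indicator {\<omega>. (Yhat n \<omega>, fst (snd (\<omega> n))) \<in> D} \<omega> = (indicator D (Yhat n \<omega>, fst (snd (\<omega> n))) :: ennreal)"
    for \<omega> by (simp split: split_indicator)
  then show ?thesis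
    using law assms by (simp add: is_Phat_def Yhat_def)
qed

lemma AE_initial: "AE \<omega> in M. fst (\<omega> 0) = Some x0"
  using law by (simp add: is_Phat_def)

lemma AE_action: "AE \<omega> in M. fst (snd (\<omega> n)) = d n (s - Shat n \<omega>) (restrict \<omega> {..<n}) (fst (\<omega> n))"
  using law by (simp add: is_Phat_def)

lemma AE_sojourn_pos: "AE \<omega> in M. 0 < snd (snd (\<omega> n))"
proof (rule AE_I')
  let ?N = "{\<omega>. (Yhat n \<omega>, fst (snd (\<omega> n))) \<in> space (HhatM n \<Otimes>\<^sub>M count_space UNIV)
    \<and> snd (snd (\<omega> n)) \<le> 0 \<and> fst (\<omega> (Suc n)) \<in> UNIV}"
  have "?N \<in> sets M"
    unfolding sets_M by (rule sets_Omegahat_Collect) measurable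
  moreover have "emeasure M ?N = 0"
    by (subst emeasure_transition) (auto simp: Qhat_at_0[OF kernel T])
  ultimately show "?N \<in> null_sets M" by auto
  show "{\<omega> \<in> space M. \<not> 0 < snd (snd (\<omega> n))} \<subseteq> ?N"
    using measurable_space[OF measurable_Yhat] by (auto simp: space_pair_measure)
qed

lemma Yhat_in_Hhat:
  assumes "\<forall>m. 0 < snd (snd (\<omega> m))"
    and "\<forall>m. fst (snd (\<omega> m)) = d m (s - Shat m \<omega>) (restrict \<omega> {..<m}) (fst (\<omega> m))"
  shows "Yhat n \<omega> \<in> Hhat n"
proof (induction n)
  case 0
  show ?case by (simp add: Hhat_def Yhat_def space_HhatM restrict_def)
next
  case (Suc n)
  have "fst (snd (\<omega> n)) \<in> Aset (fst (\<omega> n))"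
    using policy Suc assms(2) unfolding det_policy_def Yhat_def by simp
  with Suc assms(1) show ?case
    by (auto simp: Hhat_def Yhat_def space_HhatM less_Suc_eq less_imp_le)
qed

lemma AE_action_policy_action: "AE \<omega> in M. fst (snd (\<omega> n)) = policy_action d s n (Yhat n \<omega>)"
proof -
  have "AE \<omega> in M. \<forall>m. 0 < snd (snd (\<omega> m))"
    using AE_sojourn_pos by (simp add: AE_all_countable)
  moreover have "AE \<omega> in M. \<forall>m. fst (snd (\<omega> m)) = d m (s - Shat m \<omega>) (restrict \<omega> {..<m}) (fst (\<omega> m))"
    using AE_action by (simp add: AE_all_countable)
  ultimately show ?thesis
    by eventually_elim (simp add: policy_action_def Yhat_in_Hhat, simp add: Yhat_def)
qed

lemma emeasure_transition_distr_Yhat: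
  assumes t: "0 \<le> t" and B: "B \<in> sets Ehat" and D[measurable]: "D \<in> sets (HhatM n \<Otimes>\<^sub>M count_space UNIV)"
  shows "emeasure M {\<omega>. (Yhat n \<omega>, fst (snd (\<omega> n))) \<in> D \<and> snd (snd (\<omega> n)) \<le> t \<and> fst (\<omega> (Suc n)) \<in> B}
    = (\<integral>\<^sup>+hx. indicator D (hx, policy_action d s n hx)
          * ennreal (Qhat Q T t B (snd hx) (policy_action d s n hx)) \<partial>distr M (HhatM n) (Yhat n))"
proof -
  note [measurable] = measurable_policy_action[OF policy]
  have [measurable]: "(\<lambda>hx. Qhat Q T t B (snd hx) (policy_action d s n hx)) \<in> borel_measurable (HhatM n)"
    using measurable_compose[of "\<lambda>hx. (hx, policy_action d s n hx)", OF _ measurable_Qhat[OF kernel t B]]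
    by simp
  show ?thesis
    unfolding emeasure_transition[OF t B D]
    by (subst nn_integral_distr) (auto simp: measurable_M intro!: nn_integral_cong_AE
        AE_mp[OF AE_action_policy_action[of n] AE_I2])
qed

end

lemma smdp_law_distr_step_data_eq:
  fixes M1 M2 :: "'e::polish_space hpath measure"
  assumes M1: "smdp_law Q T d s x0 M1" and M2: "smdp_law Q T d s x0 M2"
    and hist: "distr M1 (HhatM n) (Yhat n) = distr M2 (HhatM n) (Yhat n)"
  shows "distr M1 (StepDataM n) (step_data n) = distr M2 (StepDataM n) (step_data n)"
proof (rule measure_pair_pair_atMost_eqI[of Ehat])
  interpret M1: smdp_law Q T d s x0 M1 by (rule M1)
  interpret M2: smdp_law Q T d s x0 M2 by (rule M2)
  show "finite_measure (distr M1 (StepDataM n) (step_data n))"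
    by (rule prob_space.finite_measure[OF M1.prob_space_distr]) (simp add: M1.measurable_M)
  show "sets (distr M1 (StepDataM n) (step_data n)) = sets ((HhatM n \<Otimes>\<^sub>M count_space UNIV) \<Otimes>\<^sub>M (borel \<Otimes>\<^sub>M Ehat))"
    "sets (distr M2 (StepDataM n) (step_data n)) = sets ((HhatM n \<Otimes>\<^sub>M count_space UNIV) \<Otimes>\<^sub>M (borel \<Otimes>\<^sub>M Ehat))"
    by (simp_all add: StepDataM_def)
  fix D :: "(('e hpath \<times> 'e option) \<times> nat) set" and t :: real and B :: "'e option set"
  assume D: "D \<in> sets (HhatM n \<Otimes>\<^sub>M count_space UNIV)" and B: "B \<in> sets Ehat"
  then have sets: "D \<times> ({..t} \<times> B) \<in> sets (StepDataM n)"
    by (simp add: StepDataM_def)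
  have vimage: "step_data n -` (D \<times> ({..t} \<times> B))
      = {\<omega>. (Yhat n \<omega>, fst (snd (\<omega> n))) \<in> D \<and> snd (snd (\<omega> n)) \<le> t \<and> fst (\<omega> (Suc n)) \<in> B}"
    by (auto simp: step_data_def)
  have "emeasure M1 (step_data n -` (D \<times> ({..t} \<times> B))) = emeasure M2 (step_data n -` (D \<times> ({..t} \<times> B)))"
  proof (cases "0 \<le> t")
    case True
    show ?thesis
      unfolding vimage M1.emeasure_transition_distr_Yhat[OF True B D]
        M2.emeasure_transition_distr_Yhat[OF True B D] hist ..
  next
    case False
    have "AE \<omega> in M. \<omega> \<notin> step_data n -` (D \<times> ({..t} \<times> B))" if "smdp_law Q T d s x0 M" for M
    proof -
      interpret smdp_law Q T d s x0 M by (rule that)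
      show ?thesis
        using AE_sojourn_pos[of n] by eventually_elim (use False in \<open>auto simp: step_data_def\<close>)
    qed
    from emeasure_eq_0_AE[OF this[OF M1]] emeasure_eq_0_AE[OF this[OF M2]]
    show ?thesis by (simp add: vimage_def)
  qed
  with sets show "emeasure (distr M1 (StepDataM n) (step_data n)) (D \<times> ({..t} \<times> B))
      = emeasure (distr M2 (StepDataM n) (step_data n)) (D \<times> ({..t} \<times> B))"
    by (simp add: emeasure_distr M1.measurable_M M2.measurable_M)
qed simp

lemma smdp_law_distr_Yhat_eq:
  fixes M1 M2 :: "'e::polish_space hpath measure"
  assumes M1: "smdp_law Q T d s x0 M1" and M2: "smdp_law Q T d s x0 M2"
  shows "distr M1 (HhatM n) (Yhat n) = distr M2 (HhatM n) (Yhat n)"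
proof (induction n)
  case 0
  let ?y = "((\<lambda>_. undefined) :: 'e hpath, Some x0)"
  have y: "?y \<in> space (HhatM 0)" by (simp add: space_HhatM)
  have "distr M (HhatM 0) (Yhat 0) = return (HhatM 0) ?y" if "smdp_law Q T d s x0 M" for M
  proof -
    interpret smdp_law Q T d s x0 M by (rule that)
    have "distr M (HhatM 0) (Yhat 0) = distr M (HhatM 0) (\<lambda>_. ?y)"
      by (rule distr_cong_AE) (use AE_initial y in \<open>auto simp: measurable_M Yhat_def restrict_def\<close>)
    also have "\<dots> = return (HhatM 0) ?y"
      using distr_const[OF y] .
    finally show ?thesis .
  qed
  with M1 M2 show ?case by simp
next
  case (Suc n)
  interpret M1: smdp_law Q T d s x0 M1 by (rule M1)
  interpret M2: smdp_law Q T d s x0 M2 by (rule M2)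
  have Yhat_Suc': "Yhat (Suc n) = hist_extend n \<circ> step_data n"
    by (simp add: fun_eq_iff Yhat_Suc)
  have "distr M1 (HhatM (Suc n)) (Yhat (Suc n))
      = distr (distr M1 (StepDataM n) (step_data n)) (HhatM (Suc n)) (hist_extend n)"
    unfolding Yhat_Suc' by (rule distr_distr[symmetric]) (auto simp: M1.measurable_M)
  also have "\<dots> = distr (distr M2 (StepDataM n) (step_data n)) (HhatM (Suc n)) (hist_extend n)"
    by (simp add: smdp_law_distr_step_data_eq[OF M1 M2 Suc.IH])
  also have "\<dots> = distr M2 (HhatM (Suc n)) (Yhat (Suc n))"
    unfolding Yhat_Suc' by (rule distr_distr) (auto simp: M2.measurable_M)
  finally show ?case .
qed

lemma measure_Omegahat_eqI:
  fixes M1 M2 :: "'e::polish_space hpath measure"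
  assumes sets: "sets M1 = sets Omegahat" "sets M2 = sets Omegahat" and "finite_measure M1"
    and hist: "\<And>n. distr M1 (HhatM n) (Yhat n) = distr M2 (HhatM n) (Yhat n)"
  shows "M1 = M2"
proof (rule measure_eqI_PiM_infinite[where I=UNIV and M="\<lambda>_. StepM"])
  show "sets M1 = sets (Pi\<^sub>M UNIV (\<lambda>_. StepM))" "sets M2 = sets (Pi\<^sub>M UNIV (\<lambda>_. StepM))"
    using sets by (simp_all add: Omegahat_def)
  fix J :: "nat set" and A :: "nat \<Rightarrow> ('e option \<times> nat \<times> real) set"
  assume J: "finite J" and A: "\<And>i. i \<in> J \<Longrightarrow> A i \<in> sets StepM"
  obtain N where N: "J \<subseteq> {..<N}" using finite_nat_bounded[OF J] by blast
  let ?D = "{hx \<in> space (HhatM N :: ('e hpath \<times> 'e option) measure). \<forall>i\<in>J. fst hx i \<in> A i}"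
  have "Measurable.pred (HhatM N) (\<lambda>hx. \<forall>i\<in>J. fst hx i \<in> A i)"
    using N A by (intro pred_intros_countable_bounded(3) pred_sets2[OF _ measurable_HhatM_step]) auto
  then have D: "?D \<in> sets (HhatM N)" by (simp add: pred_def)
  have cylinder: "prod_emb UNIV (\<lambda>_. StepM) J (Pi\<^sub>E J A) = Yhat N -` ?D"
    using N by (auto simp: prod_emb_def Yhat_def space_HhatM PiE_iff subset_eq)
  have emeasure_cylinder: "emeasure M (prod_emb UNIV (\<lambda>_. StepM) J (Pi\<^sub>E J A))
      = emeasure (distr M (HhatM N) (Yhat N)) ?D" if M: "sets M = sets Omegahat" for M
  proof -
    have "Yhat N \<in> measurable M (HhatM N)"
      unfolding measurable_cong_sets[OF M refl] by (rule measurable_Yhat)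
    from emeasure_distr[OF this D] show ?thesis
      using sets_eq_imp_space_eq[OF M] by (simp add: cylinder)
  qed
  show "emeasure M1 (prod_emb UNIV (\<lambda>_. StepM) J (Pi\<^sub>E J A))
      = emeasure M2 (prod_emb UNIV (\<lambda>_. StepM) J (Pi\<^sub>E J A))"
    unfolding emeasure_cylinder[OF sets(1)] emeasure_cylinder[OF sets(2)] hist ..
qed fact

lemma smdp_law_unique:
  assumes "smdp_law Q T d s x0 M1" and "smdp_law Q T d s x0 M2"
  shows "M1 = M2"
proof (rule measure_Omegahat_eqI)
  show "sets M1 = sets Omegahat" "sets M2 = sets Omegahat"
    using assms smdp_law.sets_M by blast+
  show "finite_measure M1"
  proof -
    interpret smdp_law Q T d s x0 M1 by (rule assms(1))
    show ?thesis by simp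
  qed
qed (rule smdp_law_distr_Yhat_eq[OF assms])

section \<open>The SMDP path generated by a semi-Markov path\<close>

text \<open>Negative sojourn times are clamped to 0, so that the history handed to the policy lies in
  \<^term>\<open>Hhat k\<close>, the only place where \<^const>\<open>det_policy\<close> guarantees measurability.
  Almost surely all sojourn times are positive and the clamping changes nothing.\<close>
definition clamp_sojourns :: "(nat \<Rightarrow> 'e \<times> real) \<Rightarrow> nat \<Rightarrow> 'e \<times> real" where
  "clamp_sojourns \<omega> = (\<lambda>m. (fst (\<omega> m), max 0 (snd (\<omega> m))))"

definition stops_at :: "(nat \<Rightarrow> real \<Rightarrow> 'e hpath \<Rightarrow> 'e option \<Rightarrow> nat) \<Rightarrow> real \<Rightarrow> nat \<Rightarrow> (nat \<Rightarrow> 'e \<times> real) \<Rightarrow> bool"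
  where "stops_at d s k \<omega> \<longleftrightarrow>
    d k (s - Sn k (clamp_sojourns \<omega>)) (fst (Y0 k (clamp_sojourns \<omega>))) (snd (Y0 k (clamp_sojourns \<omega>))) = 1"

definition smdp_path :: "(nat \<Rightarrow> real \<Rightarrow> 'e hpath \<Rightarrow> 'e option \<Rightarrow> nat) \<Rightarrow> real \<Rightarrow> real \<Rightarrow> (nat \<Rightarrow> 'e \<times> real) \<Rightarrow> 'e hpath"
  where "smdp_path d s T \<omega> = (\<lambda>n.
    if \<forall>k\<le>n. \<not> stops_at d s k \<omega> then (Some (fst (\<omega> n)), 0, snd (\<omega> n))
    else if \<forall>k<n. \<not> stops_at d s k \<omega> then (Some (fst (\<omega> n)), 1, T + 1)
    else (None, 1, T + 1))"

definition stopped_by :: "(nat \<Rightarrow> real \<Rightarrow> 'e hpath \<Rightarrow> 'e option \<Rightarrow> nat) \<Rightarrow> real \<Rightarrow> nat \<Rightarrow> (nat \<Rightarrow> 'e \<times> real) \<Rightarrow> bool"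
  where "stopped_by d s n \<omega> \<longleftrightarrow> (\<exists>k\<le>n. stops_at d s k \<omega>)"

lemma clamp_sojourns_id: "\<forall>m. 0 < snd (\<omega> m) \<Longrightarrow> clamp_sojourns \<omega> = \<omega>"
  by (auto simp: clamp_sojourns_def fun_eq_iff max_def prod_eq_iff less_imp_le)

lemma stops_at_iff:
  "\<forall>m. 0 < snd (\<omega> m) \<Longrightarrow> stops_at d s k \<omega> \<longleftrightarrow> d k (s - Sn k \<omega>) (fst (Y0 k \<omega>)) (snd (Y0 k \<omega>)) = 1"
  by (simp add: stops_at_def clamp_sojourns_id)

lemma tau_eq_stops_at:
  "\<forall>m. 0 < snd (\<omega> m) \<Longrightarrow>
    tau d s \<omega> = (if \<exists>n. stops_at d s n \<omega> then enat (LEAST n. stops_at d s n \<omega>) else \<infinity>)"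
  by (simp add: tau_def stops_at_iff)

lemma measurable_clamp_sojourns [measurable]: "clamp_sojourns \<in> measurable Omega Omega"
  unfolding clamp_sojourns_def Omega_def
  by (rule measurable_PiM_single') (measurable, auto simp: space_pair_measure)

lemma measurable_Y0 [measurable]: "Y0 k \<in> measurable (Omega :: (nat \<Rightarrow> 'e::polish_space \<times> real) measure) (HhatM k)"
  unfolding Y0_def HhatM_def StepM_def by measurable

lemma Y0_in_Hhat: "\<forall>m. 0 \<le> snd (\<omega> m) \<Longrightarrow> Y0 k \<omega> \<in> Hhat k"
  by (auto simp: Y0_def Hhat_def space_HhatM Aset_def)

lemma measurable_stops_at:
  assumes "det_policy d"
  shows "Measurable.pred (Omega :: (nat \<Rightarrow> 'e::polish_space \<times> real) measure) (stops_at d s k)"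
proof -
  have "(\<lambda>\<omega>. (s - Sn k (clamp_sojourns \<omega>), Y0 k (clamp_sojourns \<omega>)))
      \<in> measurable (Omega :: (nat \<Rightarrow> 'e \<times> real) measure) (restrict_space (borel \<Otimes>\<^sub>M HhatM k) (UNIV \<times> Hhat k))"
  proof (rule measurable_restrict_space2)
    show "(\<lambda>\<omega>. (s - Sn k (clamp_sojourns \<omega>), Y0 k (clamp_sojourns \<omega>))) \<in> space Omega \<rightarrow> UNIV \<times> Hhat k"
      by (auto intro!: Y0_in_Hhat simp: clamp_sojourns_def)
  qed measurable
  from measurable_compose[OF this det_policy_measurable[OF assms]]
  have "(\<lambda>\<omega>. d k (s - Sn k (clamp_sojourns \<omega>)) (fst (Y0 k (clamp_sojourns \<omega>))) (snd (Y0 k (clamp_sojourns \<omega>))))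
      \<in> measurable (Omega :: (nat \<Rightarrow> 'e \<times> real) measure) (count_space UNIV)"
    by simp
  then show ?thesis
    unfolding stops_at_def[abs_def] by measurable
qed

lemma measurable_smdp_path:
  assumes "det_policy d"
  shows "smdp_path d s T \<in> measurable (Omega :: (nat \<Rightarrow> 'e::polish_space \<times> real) measure) Omegahat"
  unfolding Omegahat_def
proof (rule measurable_PiM_single')
  note [measurable] = measurable_stops_at[OF assms]
  show "(\<lambda>\<omega>. smdp_path d s T \<omega> n) \<in> measurable Omega StepM" for n
    unfolding smdp_path_def StepM_def by measurable
qed simp

lemma stops_at_cong:
  assumes "\<forall>m<n. \<omega>' m = \<omega> m" "fst (\<omega>' n) = fst (\<omega> n)" "k \<le> n"
  shows "stops_at d s k \<omega>' = stops_at d s k \<omega>"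
proof -
  have "\<forall>m<k. \<omega>' m = \<omega> m" "fst (\<omega>' k) = fst (\<omega> k)"
    using assms by (auto simp: le_less)
  then have "Sn k (clamp_sojourns \<omega>') = Sn k (clamp_sojourns \<omega>)"
    "Y0 k (clamp_sojourns \<omega>') = Y0 k (clamp_sojourns \<omega>)"
    by (auto simp: Sn_def clamp_sojourns_def Y0_def restrict_def fun_eq_iff)
  then show ?thesis
    by (simp add: stops_at_def)
qed

lemma smdp_path_cong:
  assumes "\<forall>m<n. \<omega>' m = \<omega> m" "fst (\<omega>' n) = fst (\<omega> n)"
  shows "\<forall>m<n. smdp_path d s T \<omega>' m = smdp_path d s T \<omega> m"
    "fst (smdp_path d s T \<omega>' n) = fst (smdp_path d s T \<omega> n)"
    "fst (snd (smdp_path d s T \<omega>' n)) = fst (snd (smdp_path d s T \<omega> n))"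
  using assms stops_at_cong[OF assms] by (auto simp: smdp_path_def)

lemma measurable_stopped_by:
  assumes "det_policy d"
  shows "Measurable.pred (Omega :: (nat \<Rightarrow> 'e::polish_space \<times> real) measure) (stopped_by d s n)"
proof -
  note [measurable] = measurable_stops_at[OF assms]
  show ?thesis unfolding stopped_by_def[abs_def] by measurable
qed

lemma stopped_by_cong:
  "\<forall>m<n. \<omega>' m = \<omega> m \<Longrightarrow> fst (\<omega>' n) = fst (\<omega> n) \<Longrightarrow> stopped_by d s n \<omega>' = stopped_by d s n \<omega>"
  unfolding stopped_by_def using stops_at_cong by blast

lemma smdp_path_not_stopped:
  "\<not> stopped_by d s n \<omega> \<Longrightarrow> smdp_path d s T \<omega> n = (Some (fst (\<omega> n)), 0, snd (\<omega> n))"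
  by (auto simp: smdp_path_def stopped_by_def)

lemma smdp_path_stops_at:
  "stops_at d s n \<omega> \<Longrightarrow> \<forall>k<n. \<not> stops_at d s k \<omega> \<Longrightarrow> smdp_path d s T \<omega> n = (Some (fst (\<omega> n)), 1, T + 1)"
  by (auto simp: smdp_path_def)

lemma smdp_path_stopped:
  "stopped_by d s n \<omega> \<Longrightarrow> fst (snd (smdp_path d s T \<omega> n)) = 1 \<and> snd (snd (smdp_path d s T \<omega> n)) = T + 1"
  by (auto simp: smdp_path_def stopped_by_def)

lemma fst_smdp_path_0 [simp]: "fst (smdp_path d s T \<omega> 0) = Some (fst (\<omega> 0))"
  by (simp add: smdp_path_def)

lemma fst_smdp_path_Suc:
  "fst (smdp_path d s T \<omega> (Suc n)) = (if stopped_by d s n \<omega> then None else Some (fst (\<omega> (Suc n))))"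
  by (auto simp: smdp_path_def stopped_by_def less_Suc_eq_le dest: le_SucI)

lemma Shat_smdp_path:
  "\<forall>k<n. \<not> stops_at d s k \<omega> \<Longrightarrow> Shat n (smdp_path d s T \<omega>) = Sn n \<omega>"
  unfolding Shat_def Sn_def by (rule sum.cong) (auto simp: smdp_path_def)

lemma Yhat_smdp_path:
  "\<forall>k<n. \<not> stops_at d s k \<omega> \<Longrightarrow> Yhat n (smdp_path d s T \<omega>) = (fst (Y0 n \<omega>), fst (smdp_path d s T \<omega> n))"
  by (auto simp: Yhat_def Y0_def restrict_def fun_eq_iff smdp_path_def)

lemma Yhat_smdp_path_in_Hhat:
  "\<forall>m. 0 < snd (\<omega> m) \<Longrightarrow> 0 \<le> T \<Longrightarrow> Yhat n (smdp_path d s T \<omega>) \<in> Hhat n"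
  by (auto simp: Hhat_def Yhat_def space_HhatM smdp_path_def Aset_def less_imp_le)

text \<open>Before stopping, the policy sees exactly the history \<^term>\<open>Y0 n \<omega>\<close>; after stopping,
  the cemetery state admits only the action 1.\<close>
lemma smdp_path_action:
  assumes policy: "det_policy d" and pos: "\<forall>m. 0 < snd (\<omega> m)" and T: "0 \<le> T"
  shows "fst (snd (smdp_path d s T \<omega> n)) = policy_action d s n (Yhat n (smdp_path d s T \<omega>))"
proof -
  let ?\<omega>' = "smdp_path d s T \<omega>"
  have H: "Yhat n ?\<omega>' \<in> Hhat n"
    using Yhat_smdp_path_in_Hhat[OF pos T] .
  then have action: "policy_action d s n (Yhat n ?\<omega>') = d n (s - Shat n ?\<omega>') (fst (Yhat n ?\<omega>')) (fst (?\<omega>' n))"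
    by (simp add: policy_action_def)
  have Aset: "policy_action d s n (Yhat n ?\<omega>') \<in> Aset (fst (?\<omega>' n))"
    using H policy unfolding det_policy_def policy_action_def by (auto simp: Yhat_def)
  show ?thesis
  proof (cases "\<forall>k<n. \<not> stops_at d s k \<omega>")
    case True
    have "fst (?\<omega>' n) = Some (fst (\<omega> n))"
      using True by (simp add: smdp_path_def)
    then have "policy_action d s n (Yhat n ?\<omega>') = d n (s - Sn n \<omega>) (fst (Y0 n \<omega>)) (snd (Y0 n \<omega>))"
      using action Yhat_smdp_path[OF True] Shat_smdp_path[OF True] by (simp add: Y0_def)
    then have "policy_action d s n (Yhat n ?\<omega>') = 1 \<longleftrightarrow> stops_at d s n \<omega>"
      using stops_at_iff[OF pos] by simp
    with True Aset show ?thesis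
      by (auto simp: smdp_path_def Aset_def less_le)
  next
    case False
    then have "fst (?\<omega>' n) = None" "fst (snd (?\<omega>' n)) = 1"
      by (auto simp: smdp_path_def intro: less_imp_le)
    with Aset show ?thesis
      by (simp add: Aset_def)
  qed
qed

lemma smdp_path_hist_path:
  "Yhat n (smdp_path d s T (hist_path n (Yn n \<omega>))) = Yhat n (smdp_path d s T \<omega>)"
  "fst (snd (smdp_path d s T (hist_path n (Yn n \<omega>)) n)) = fst (snd (smdp_path d s T \<omega> n))"
  "stopped_by d s n (hist_path n (Yn n \<omega>)) = stopped_by d s n \<omega>"
proof -
  have "\<forall>m<n. hist_path n (Yn n \<omega>) m = \<omega> m" "fst (hist_path n (Yn n \<omega>) n) = fst (\<omega> n)"
    by (simp_all add: hist_path_Yn)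
  note cong = smdp_path_cong[OF this] stopped_by_cong[OF this]
  show "Yhat n (smdp_path d s T (hist_path n (Yn n \<omega>))) = Yhat n (smdp_path d s T \<omega>)"
    using cong by (simp add: Yhat_def restrict_def fun_eq_iff)
  show "fst (snd (smdp_path d s T (hist_path n (Yn n \<omega>)) n)) = fst (snd (smdp_path d s T \<omega> n))"
    "stopped_by d s n (hist_path n (Yn n \<omega>)) = stopped_by d s n \<omega>"
    using cong by simp_all
qed

lemma smdp_path_transition_event:
  "snd (snd (smdp_path d s T \<omega> n)) \<le> t \<and> fst (smdp_path d s T \<omega> (Suc n)) \<in> B \<longleftrightarrow>
    (if stopped_by d s n \<omega> then T + 1 \<le> t \<and> None \<in> B else snd (\<omega> n) \<le> t \<and> Some (fst (\<omega> (Suc n))) \<in> B)"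
  using smdp_path_not_stopped[of d s n \<omega> T] smdp_path_stopped[of d s n \<omega> T]
  by (simp add: fst_smdp_path_Suc)

lemma Qhat_smdp_path:
  "Qhat Q T t B (fst (smdp_path d s T \<omega> n)) (fst (snd (smdp_path d s T \<omega> n))) =
    (if stopped_by d s n \<omega> then if T + 1 \<le> t \<and> None \<in> B then 1 else 0
     else measure (Q t (fst (\<omega> n))) (Some -` B))"
  using smdp_path_not_stopped[of d s n \<omega> T] smdp_path_stopped[of d s n \<omega> T]
  by (simp add: Qhat_def split: option.split)

section \<open>The SMDP law as an image of the semi-Markov law\<close>

locale smp_policy = smp_law Q x0 P
  for Q :: "real \<Rightarrow> 'e::polish_space \<Rightarrow> 'e measure" and x0 P +
  fixes T :: real and d :: "nat \<Rightarrow> real \<Rightarrow> 'e hpath \<Rightarrow> 'e option \<Rightarrow> nat" and s :: real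
  assumes Pi0: "d \<in> Pi0_DH" and T: "0 \<le> T"
begin

lemma policy: "det_policy d"
  using Pi0 by (simp add: Pi0_DH_def)

lemmas measurable_policy [measurable] = measurable_policy_action[OF policy]
  measurable_stopped_by[OF policy] measurable_smdp_path[OF policy]

abbreviation Phat :: "'e hpath measure" where
  "Phat \<equiv> distr P Omegahat (smdp_path d s T)"

lemma measurable_smdp_path_P [measurable]: "smdp_path d s T \<in> measurable P Omegahat"
  using measurable_smdp_path[OF policy] by (simp add: measurable_P)

lemma AE_initial_Phat: "AE \<omega> in Phat. fst (\<omega> 0) = Some x0"
proof -
  have "Some ` {x0} \<in> sets Ehat"
    by (rule Some_image_sets_Ehat) simp
  then have "{\<omega> \<in> space Omegahat. fst (\<omega> 0) \<in> Some ` {x0}} \<in> sets Omegahat"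
    by measurable
  then show ?thesis
    using AE_initial by (subst AE_distr_iff) auto
qed

lemma AE_action_Phat:
  "AE \<omega> in Phat. fst (snd (\<omega> n)) = d n (s - Shat n \<omega>) (restrict \<omega> {..<n}) (fst (\<omega> n))"
proof -
  have "{\<omega> \<in> space Omegahat. Yhat n \<omega> \<in> Hhat n \<and> fst (snd (\<omega> n)) = policy_action d s n (Yhat n \<omega>)}
      \<in> sets Omegahat"
    by measurable
  moreover have "AE \<omega> in P. Yhat n (smdp_path d s T \<omega>) \<in> Hhat n
      \<and> fst (snd (smdp_path d s T \<omega> n)) = policy_action d s n (Yhat n (smdp_path d s T \<omega>))"
    using AE_all_sojourn_pos
    by eventually_elim (simp add: Yhat_smdp_path_in_Hhat[OF _ T] smdp_path_action[OF policy _ T])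
  ultimately have "AE \<omega> in Phat. Yhat n \<omega> \<in> Hhat n \<and> fst (snd (\<omega> n)) = policy_action d s n (Yhat n \<omega>)"
    by (subst AE_distr_iff) auto
  then show ?thesis
    by eventually_elim (simp add: policy_action_def, simp add: Yhat_def)
qed

lemma emeasure_Phat_transition:
  assumes t: "0 \<le> t" and B[measurable]: "B \<in> sets Ehat"
    and D[measurable]: "D \<in> sets (HhatM n \<Otimes>\<^sub>M count_space UNIV)"
  shows "emeasure Phat {\<omega>. (Yhat n \<omega>, fst (snd (\<omega> n))) \<in> D \<and> snd (snd (\<omega> n)) \<le> t \<and> fst (\<omega> (Suc n)) \<in> B}
    = (\<integral>\<^sup>+ \<omega>. indicator D (Yhat n \<omega>, fst (snd (\<omega> n)))
          * ennreal (Qhat Q T t B (fst (\<omega> n)) (fst (snd (\<omega> n)))) \<partial>Phat)"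
proof -
  \<comment> \<open>Until the policy stops, a step of the SMDP path is a step of the semi-Markov process,
    whose conditional law given \<open>Yn n\<close> is \<open>Q\<close>; afterwards the step is deterministic.\<close>
  let ?Z = "\<lambda>\<omega>. (Yhat n (smdp_path d s T \<omega>), fst (snd (smdp_path d s T \<omega> n)))"
  let ?f = "\<lambda>\<omega>. indicator D (?Z \<omega>) * indicator {\<omega>. \<not> stopped_by d s n \<omega>} \<omega> :: ennreal"
  let ?g = "\<lambda>\<omega>. indicator D (?Z \<omega>) * indicator {\<omega>. stopped_by d s n \<omega>} \<omega> :: ennreal"
  let ?A = "{\<omega>. snd (\<omega> n) \<le> t \<and> fst (\<omega> (Suc n)) \<in> Some -` B}"
  let ?q = "\<lambda>\<omega>. ennreal (measure (Q t (fst (\<omega> n))) (Some -` B))"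
  let ?c = "ennreal (if T + 1 \<le> t \<and> None \<in> B then 1 else 0)"
  let ?S = "{\<omega>. (Yhat n \<omega>, fst (snd (\<omega> n))) \<in> D \<and> snd (snd (\<omega> n)) \<le> t \<and> fst (\<omega> (Suc n)) \<in> B}"
  have [measurable]: "Some -` B \<in> sets borel"
    by (rule Some_vimage_sets_borel[OF B])
  have [measurable]: "(\<lambda>x. measure (Q t x) (Some -` B)) \<in> borel_measurable borel"
    by (rule semi_Markov_kernel_measurable[OF kernel t]) measurable
  note [measurable] = measurable_Qhat_Omegahat[OF kernel t B]
  have [measurable]: "?Z \<in> measurable Omega (HhatM n \<Otimes>\<^sub>M count_space UNIV)"
    using measurable_compose[OF measurable_smdp_path[OF policy],
        of "\<lambda>\<omega>. (Yhat n \<omega>, fst (snd (\<omega> n)))"]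
    by simp
  have f: "?f \<in> borel_measurable Omega" and g: "?g \<in> borel_measurable Omega"
    by measurable
  have [measurable]: "?A \<in> sets Omega"
    by (rule sets_Omega_Collect) measurable
  have S: "?S \<in> sets Omegahat"
    by (rule sets_Omegahat_Collect) measurable
  have f_hist: "?f \<omega> = ?f (hist_path n (Yn n \<omega>))" for \<omega>
    by (simp add: smdp_path_hist_path split: split_indicator)
  have "emeasure Phat ?S = emeasure P (smdp_path d s T -` ?S)"
    using S by (simp add: emeasure_distr)
  also have "\<dots> = (\<integral>\<^sup>+\<omega>. indicator ?S (smdp_path d s T \<omega>) \<partial>P)"
    using measurable_sets[OF measurable_smdp_path_P S]
    by (simp flip: nn_integral_indicator add: indicator_vimage[symmetric])
  also have "\<dots> = (\<integral>\<^sup>+\<omega>. ?f \<omega> * indicator ?A \<omega> + ?g \<omega> * ?c \<partial>P)"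
    by (intro nn_integral_cong) (simp add: smdp_path_transition_event split: split_indicator)
  also have "\<dots> = (\<integral>\<^sup>+\<omega>. ?f \<omega> * indicator ?A \<omega> \<partial>P) + (\<integral>\<^sup>+\<omega>. ?g \<omega> * ?c \<partial>P)"
    by (rule nn_integral_add) (simp_all add: measurable_P)
  also have "(\<integral>\<^sup>+\<omega>. ?f \<omega> * indicator ?A \<omega> \<partial>P) = (\<integral>\<^sup>+\<omega>. ?f \<omega> * ?q \<omega> \<partial>P)"
    by (rule nn_integral_transition[OF f f_hist t]) simp
  also have "(\<integral>\<^sup>+\<omega>. ?f \<omega> * ?q \<omega> \<partial>P) + (\<integral>\<^sup>+\<omega>. ?g \<omega> * ?c \<partial>P) = (\<integral>\<^sup>+\<omega>. ?f \<omega> * ?q \<omega> + ?g \<omega> * ?c \<partial>P)"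
    by (rule nn_integral_add[symmetric]) (simp_all add: measurable_P)
  also have "\<dots> = (\<integral>\<^sup>+\<omega>. indicator D (?Z \<omega>)
      * ennreal (Qhat Q T t B (fst (smdp_path d s T \<omega> n)) (fst (snd (smdp_path d s T \<omega> n)))) \<partial>P)"
    by (intro nn_integral_cong) (simp add: Qhat_smdp_path split: split_indicator)
  also have "\<dots> = (\<integral>\<^sup>+ \<omega>. indicator D (Yhat n \<omega>, fst (snd (\<omega> n)))
      * ennreal (Qhat Q T t B (fst (\<omega> n)) (fst (snd (\<omega> n)))) \<partial>Phat)"
    by (rule nn_integral_distr[symmetric]) measurable
  finally show ?thesis .
qed

lemma smdp_law_Phat: "smdp_law Q T d s x0 Phat"
proof -
  have "is_Phat Q T d s x0 Phat"
    unfolding is_Phat_def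
  proof (intro conjI allI impI)
    show "prob_space Phat"
      by (rule prob_space_distr) simp
    show "AE \<omega> in Phat. fst (snd (\<omega> n)) = d n (s - Shat n \<omega>) (restrict \<omega> {..<n}) (fst (\<omega> n))" for n
      by (rule AE_action_Phat)
    fix n :: nat and t :: real and B :: "'e option set" and D :: "(('e hpath \<times> 'e option) \<times> nat) set"
    assume "0 \<le> t" "B \<in> sets Ehat" "D \<in> sets (HhatM n \<Otimes>\<^sub>M (count_space UNIV :: nat measure))"
    from emeasure_Phat_transition[OF this]
    show "emeasure Phat {\<omega> \<in> space Phat. ((restrict \<omega> {..<n}, fst (\<omega> n)), fst (snd (\<omega> n))) \<in> D
          \<and> snd (snd (\<omega> n)) \<le> t \<and> fst (\<omega> (Suc n)) \<in> B}
        = (\<integral>\<^sup>+ \<omega>. indicator {\<omega> \<in> space Phat. ((restrict \<omega> {..<n}, fst (\<omega> n)), fst (snd (\<omega> n))) \<in> D} \<omega>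
          * ennreal (Qhat Q T t B (fst (\<omega> n)) (fst (snd (\<omega> n)))) \<partial>Phat)"
      by (simp add: Yhat_def indicator_def)
  qed (simp_all add: AE_initial_Phat)
  then show ?thesis
    using kernel policy T by (simp add: smdp_law_def)
qed

lemma is_Phat_eq_Phat: "is_Phat Q T d s x0 M \<Longrightarrow> M = Phat"
  using kernel policy T smdp_law_Phat by (intro smdp_law_unique) (auto simp: smdp_law_def)

end

section \<open>Rewards\<close>

lemma measurable_Xhat_t [measurable]:
  "(\<lambda>p. Xhat_t (snd p) (fst p)) \<in> measurable (Omegahat \<Otimes>\<^sub>M borel) Ehat"
  unfolding Xhat_t_def Nhat_def
  by (rule measurable_compose_countable[where f="\<lambda>i p. fst (fst p i)"]) measurable

lemma measurable_Ahat_t [measurable]: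
  "(\<lambda>p. Ahat_t (snd p) (fst p)) \<in> measurable (Omegahat \<Otimes>\<^sub>M borel) (count_space UNIV)"
  unfolding Ahat_t_def Nhat_def
  by (rule measurable_compose_countable[where f="\<lambda>i p. fst (snd (fst p i))"]) measurable

lemma measurable_Xhat_t_at [measurable]: "Xhat_t t \<in> measurable Omegahat Ehat"
  using measurable_compose[OF measurable_Pair[OF measurable_ident_sets[OF refl] measurable_const[of t]]
      measurable_Xhat_t]
  by simp

lemma measurable_Ahat_t_at [measurable]: "Ahat_t t \<in> measurable Omegahat (count_space UNIV)"
  using measurable_compose[OF measurable_Pair[OF measurable_ident_sets[OF refl] measurable_const[of t]]
      measurable_Ahat_t]
  by simp

lemma measurable_state_action:
  fixes f :: "'e::polish_space option \<Rightarrow> nat \<Rightarrow> real"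
  assumes f: "\<And>a. (\<lambda>x. f x a) \<in> borel_measurable Ehat"
    and X: "X \<in> measurable M Ehat" and A: "A \<in> measurable M (count_space UNIV)"
  shows "(\<lambda>\<omega>. f (X \<omega>) (A \<omega>)) \<in> borel_measurable M"
  by (rule measurable_compose_countable[where f="\<lambda>a \<omega>. f (X \<omega>) a", OF _ A])
    (rule measurable_compose[OF X f])

lemma measurable_chat: "c \<in> borel_measurable borel \<Longrightarrow> (\<lambda>x. chat c x a) \<in> borel_measurable Ehat"
  by (rule measurable_from_Ehat) (simp_all add: chat_def)

lemma measurable_ghat: "g \<in> borel_measurable borel \<Longrightarrow> (\<lambda>x. ghat g x a) \<in> borel_measurable Ehat"
  by (rule measurable_from_Ehat) (simp_all add: ghat_def)

definition smdp_reward :: "('e \<Rightarrow> real) \<Rightarrow> ('e \<Rightarrow> real) \<Rightarrow> real \<Rightarrow> 'e hpath \<Rightarrow> ennreal" where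
  "smdp_reward c g s \<omega> = (\<integral>\<^sup>+ t \<in> {0..s}. ennreal (chat c (Xhat_t t \<omega>) (Ahat_t t \<omega>)) \<partial>lborel)
    + ennreal (ghat g (Xhat_t s \<omega>) (Ahat_t s \<omega>))"

lemma U_val_eq_smdp_reward: "U_val c g M s = (\<integral>\<^sup>+\<omega>. smdp_reward c g s \<omega> \<partial>M)"
  by (simp add: U_val_def smdp_reward_def)

lemma measurable_smdp_reward:
  assumes c: "c \<in> borel_measurable borel" and g: "g \<in> borel_measurable borel"
  shows "smdp_reward c g s \<in> borel_measurable (Omegahat :: 'e::polish_space hpath measure)"
proof -
  have [measurable]: "(\<lambda>p. chat c (Xhat_t (snd p) (fst p)) (Ahat_t (snd p) (fst p)))
      \<in> borel_measurable (Omegahat \<Otimes>\<^sub>M (lborel :: real measure))"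
    by (rule measurable_state_action[OF measurable_chat[OF c]]) simp_all
  have [measurable]: "(\<lambda>\<omega>. ghat g (Xhat_t s \<omega>) (Ahat_t s \<omega>)) \<in> borel_measurable (Omegahat :: 'e hpath measure)"
    by (rule measurable_state_action[OF measurable_ghat[OF g]]) measurable
  have "(\<lambda>\<omega>. \<integral>\<^sup>+ t. ennreal (chat c (Xhat_t t \<omega>) (Ahat_t t \<omega>)) * indicator {0..s} t \<partial>lborel)
      \<in> borel_measurable (Omegahat :: 'e hpath measure)"
    by (rule lborel.borel_measurable_nn_integral_fst[where f="\<lambda>(\<omega>, t). _ \<omega> t", simplified]) measurable
  then show ?thesis
    unfolding smdp_reward_def[abs_def] by measurable
qed

lemma Shat_smdp_path_Suc_stops_at:
  assumes "stops_at d s k \<omega>" "\<forall>i<k. \<not> stops_at d s i \<omega>"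
  shows "Shat (Suc k) (smdp_path d s T \<omega>) = Sn k \<omega> + (T + 1)"
  using Shat_smdp_path[OF assms(2)] smdp_path_stops_at[OF assms] by (simp add: Shat_def)

lemma Nhat_smdp_path_before:
  assumes k: "\<forall>i<k. \<not> stops_at d s i \<omega>" and t: "0 \<le> t" "t < Sn k \<omega>"
  shows "Nhat t (smdp_path d s T \<omega>) = (LEAST n. t < Sn (Suc n) \<omega>)" "(LEAST n. t < Sn (Suc n) \<omega>) < k"
proof -
  let ?N = "LEAST n. t < Sn (Suc n) \<omega>"
  obtain K where K: "k = Suc K"
    using t by (cases k) auto
  have "t < Sn (Suc K) \<omega>" using t K by simp
  then have N: "?N \<le> K" "t < Sn (Suc ?N) \<omega>"
    by (auto intro: Least_le LeastI)
  then show "?N < k" using K by simp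
  have Shat_eq: "Shat (Suc m) (smdp_path d s T \<omega>) = Sn (Suc m) \<omega>" if "m \<le> K" for m
    using k K that by (intro Shat_smdp_path) auto
  show "Nhat t (smdp_path d s T \<omega>) = ?N"
    unfolding Nhat_def
  proof (rule Least_equality)
    show "t < Shat (Suc ?N) (smdp_path d s T \<omega>)"
      using N Shat_eq by simp
    show "?N \<le> y" if y: "t < Shat (Suc y) (smdp_path d s T \<omega>)" for y
    proof (rule ccontr)
      assume "\<not> ?N \<le> y"
      then have "y < ?N" by simp
      then have "\<not> t < Sn (Suc y) \<omega>"
        by (rule not_less_Least)
      moreover have "y \<le> K"
        using \<open>y < ?N\<close> N(1) by simp
      ultimately show False using y Shat_eq by simp
    qed
  qed
qed

lemma Xhat_Ahat_smdp_path_before: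
  assumes "\<forall>i<k. \<not> stops_at d s i \<omega>" "0 \<le> t" "t < Sn k \<omega>"
  shows "Xhat_t t (smdp_path d s T \<omega>) = Some (Xt t \<omega>) \<and> Ahat_t t (smdp_path d s T \<omega>) = 0"
proof -
  let ?N = "LEAST n. t < Sn (Suc n) \<omega>"
  note N = Nhat_smdp_path_before[OF assms]
  have "\<not> stopped_by d s ?N \<omega>"
    using N(2) assms(1) by (auto simp: stopped_by_def)
  then show ?thesis
    by (simp add: Xhat_t_def Ahat_t_def Xt_def N(1) smdp_path_not_stopped)
qed

lemma Xhat_Ahat_smdp_path_after:
  assumes pos: "\<forall>m. 0 < snd (\<omega> m)" and stop: "stops_at d s k \<omega>" "\<forall>i<k. \<not> stops_at d s i \<omega>"
    and t: "Sn k \<omega> \<le> t" "t < Sn k \<omega> + (T + 1)"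
  shows "Xhat_t t (smdp_path d s T \<omega>) = Some (fst (\<omega> k)) \<and> Ahat_t t (smdp_path d s T \<omega>) = 1"
proof -
  have "Nhat t (smdp_path d s T \<omega>) = k"
    unfolding Nhat_def
  proof (rule Least_equality)
    show "t < Shat (Suc k) (smdp_path d s T \<omega>)"
      using Shat_smdp_path_Suc_stops_at[OF stop] t by simp
    show "k \<le> y" if y: "t < Shat (Suc y) (smdp_path d s T \<omega>)" for y
    proof (rule ccontr)
      assume "\<not> k \<le> y"
      then have "Shat (Suc y) (smdp_path d s T \<omega>) = Sn (Suc y) \<omega>" "Sn (Suc y) \<omega> \<le> Sn k \<omega>"
        using stop(2) by (auto intro!: Shat_smdp_path Sn_mono[OF pos])
      then show False using y t by simp
    qed
  qed
  then show ?thesis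
    using smdp_path_stops_at[OF stop] by (simp add: Xhat_t_def Ahat_t_def)
qed

text \<open>This is where \<^term>\<open>d \<in> Pi0_DH\<close> enters: with no time left, the policy never stops.\<close>
lemma Sn_stops_at_neq:
  assumes "d \<in> Pi0_DH" and pos: "\<forall>m. 0 < snd (\<omega> m)" and "stops_at d s k \<omega>"
  shows "Sn k \<omega> \<noteq> s"
proof
  assume "Sn k \<omega> = s"
  moreover have "Y0 k \<omega> \<in> H0 k"
    using pos by (auto simp: Y0_def H0_def less_imp_le)
  ultimately show False
    using assms stops_at_iff[OF pos] by (cases "Y0 k \<omega>") (auto simp: Pi0_DH_def)
qed

lemma smdp_reward_never_stops:
  assumes pos: "\<forall>m. 0 < snd (\<omega> m)" and never: "\<forall>k. \<not> stops_at d s k \<omega>"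
    and reach: "\<exists>n. s \<le> Sn n \<omega>"
  shows "smdp_reward c g s (smdp_path d s T \<omega>) = reward c g s (tau d s \<omega>) \<omega>"
proof -
  have "smdp_path d s T \<omega> m = (Some (fst (\<omega> m)), 0, snd (\<omega> m))" for m
    using never by (simp add: smdp_path_not_stopped stopped_by_def)
  moreover have "Shat m (smdp_path d s T \<omega>) = Sn m \<omega>" for m
    using never by (simp add: Shat_smdp_path)
  ultimately have "Xhat_t t (smdp_path d s T \<omega>) = Some (Xt t \<omega>)" "Ahat_t t (smdp_path d s T \<omega>) = 0" for t
    by (simp_all add: Xhat_t_def Ahat_t_def Nhat_def Xt_def)
  moreover have "\<not> S_stop (tau d s \<omega>) \<omega> < ereal s"
  proof -
    have "incseq (\<lambda>n. ereal (Sn n \<omega>))"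
      by (rule incseq_SucI) (simp add: Sn_mono[OF pos])
    then have lim: "lim (\<lambda>n. ereal (Sn n \<omega>)) = (SUP n. ereal (Sn n \<omega>))"
      by (rule limI[OF LIMSEQ_SUP])
    obtain n where "s \<le> Sn n \<omega>" using reach by blast
    then have "ereal s \<le> (SUP n. ereal (Sn n \<omega>))"
      by (intro SUP_upper2[OF UNIV_I]) simp
    then show ?thesis
      using never by (simp add: tau_eq_stops_at[OF pos] S_stop_def lim not_less)
  qed
  ultimately show ?thesis
    by (simp add: smdp_reward_def reward_def chat_def ghat_def)
qed

lemma smdp_reward_stops_after:
  assumes stop: "\<forall>i<k. \<not> stops_at d s i \<omega>" and s: "0 \<le> s" "s < Sn k \<omega>"
    and tau: "tau d s \<omega> = enat k"
  shows "smdp_reward c g s (smdp_path d s T \<omega>) = reward c g s (tau d s \<omega>) \<omega>"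
proof -
  have XA: "Xhat_t t (smdp_path d s T \<omega>) = Some (Xt t \<omega>) \<and> Ahat_t t (smdp_path d s T \<omega>) = 0"
    if "t \<in> {0..s}" for t
    using that s by (intro Xhat_Ahat_smdp_path_before[OF stop]) auto
  then have "(\<integral>\<^sup>+ t \<in> {0..s}. ennreal (chat c (Xhat_t t (smdp_path d s T \<omega>)) (Ahat_t t (smdp_path d s T \<omega>))) \<partial>lborel)
      = (\<integral>\<^sup>+ t \<in> {0..s}. ennreal (c (Xt t \<omega>)) \<partial>lborel)"
    by (intro nn_integral_cong) (auto simp: chat_def split: split_indicator)
  moreover have "ghat g (Xhat_t s (smdp_path d s T \<omega>)) (Ahat_t s (smdp_path d s T \<omega>)) = 0"
    using XA[of s] s by (simp add: ghat_def)
  ultimately show ?thesis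
    using s by (simp add: smdp_reward_def reward_def tau S_stop_def)
qed

lemma smdp_reward_stops_before:
  assumes pos: "\<forall>m. 0 < snd (\<omega> m)" and stop: "stops_at d s k \<omega>" "\<forall>i<k. \<not> stops_at d s i \<omega>"
    and s: "Sn k \<omega> < s" "s \<le> T" and tau: "tau d s \<omega> = enat k"
  shows "smdp_reward c g s (smdp_path d s T \<omega>) = reward c g s (tau d s \<omega>) \<omega>"
proof -
  have Sk: "0 \<le> Sn k \<omega>" by (rule Sn_nonneg[OF pos])
  have stopped: "Xhat_t t (smdp_path d s T \<omega>) = Some (fst (\<omega> k)) \<and> Ahat_t t (smdp_path d s T \<omega>) = 1"
    if "Sn k \<omega> \<le> t" "t \<le> s" for t
    using that s Sk by (intro Xhat_Ahat_smdp_path_after[OF pos stop]) auto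
  have "AE t in lborel. ennreal (chat c (Xhat_t t (smdp_path d s T \<omega>)) (Ahat_t t (smdp_path d s T \<omega>)))
      * indicator {0..s} t = ennreal (c (Xt t \<omega>)) * indicator {t. 0 \<le> t \<and> ereal t \<le> ereal (Sn k \<omega>)} t"
    using AE_lborel_singleton[of "Sn k \<omega>"]
  proof eventually_elim
    case (elim t)
    consider "t < 0" | "0 \<le> t" "t < Sn k \<omega>" | "Sn k \<omega> < t" "t \<le> s" | "s < t"
      using elim by (cases "t < 0"; cases "t < Sn k \<omega>"; cases "s < t") auto
    then show ?case
    proof cases
      case 2
      then have "Xhat_t t (smdp_path d s T \<omega>) = Some (Xt t \<omega>) \<and> Ahat_t t (smdp_path d s T \<omega>) = 0"
        by (intro Xhat_Ahat_smdp_path_before[OF stop(2)]) auto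
      then show ?thesis using 2 s by (auto simp: chat_def split: split_indicator)
    next
      case 3
      then show ?thesis using stopped[of t] by (auto simp: chat_def split: split_indicator)
    qed (use s Sk in \<open>auto split: split_indicator\<close>)
  qed
  then have "(\<integral>\<^sup>+ t \<in> {0..s}. ennreal (chat c (Xhat_t t (smdp_path d s T \<omega>)) (Ahat_t t (smdp_path d s T \<omega>))) \<partial>lborel)
      = (\<integral>\<^sup>+ t \<in> {t. 0 \<le> t \<and> ereal t \<le> ereal (Sn k \<omega>)}. ennreal (c (Xt t \<omega>)) \<partial>lborel)"
    by (rule nn_integral_cong_AE)
  moreover have "ghat g (Xhat_t s (smdp_path d s T \<omega>)) (Ahat_t s (smdp_path d s T \<omega>)) = g (fst (\<omega> k))"
    using stopped[of s] s by (simp add: ghat_def)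
  ultimately show ?thesis
    using s by (simp add: smdp_reward_def reward_def tau S_stop_def Xt_Sn[OF pos])
qed

lemma smdp_reward_smdp_path:
  assumes "d \<in> Pi0_DH" and pos: "\<forall>m. 0 < snd (\<omega> m)" and reach: "\<exists>n. s \<le> Sn n \<omega>"
    and s: "0 \<le> s" "s \<le> T"
  shows "smdp_reward c g s (smdp_path d s T \<omega>) = reward c g s (tau d s \<omega>) \<omega>"
proof (cases "\<exists>k. stops_at d s k \<omega>")
  case False
  then show ?thesis
    by (intro smdp_reward_never_stops[OF pos _ reach]) simp
next
  case True
  define k where "k = (LEAST k. stops_at d s k \<omega>)"
  have stop: "stops_at d s k \<omega>"
    unfolding k_def using True by (rule LeastI_ex)
  have before: "\<forall>i<k. \<not> stops_at d s i \<omega>"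
    unfolding k_def using not_less_Least by blast
  have tau: "tau d s \<omega> = enat k"
    using True by (simp add: tau_eq_stops_at[OF pos] k_def)
  have "Sn k \<omega> \<noteq> s"
    by (rule Sn_stops_at_neq[OF assms(1) pos stop])
  then show ?thesis
  proof (cases "s < Sn k \<omega>")
    case True
    then show ?thesis
      by (rule smdp_reward_stops_after[OF before s(1) _ tau])
  next
    case False
    with \<open>Sn k \<omega> \<noteq> s\<close> have "Sn k \<omega> < s" by simp
    then show ?thesis
      by (rule smdp_reward_stops_before[OF pos stop before _ s(2) tau])
  qed
qed

theorem theorem4p1:
  fixes Q :: "real \<Rightarrow> 'e::polish_space \<Rightarrow> 'e measure"
    and c g :: "'e \<Rightarrow> real" and T :: real
    and d :: "nat \<Rightarrow> real \<Rightarrow> 'e hpath \<Rightarrow> 'e option \<Rightarrow> nat"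
  assumes kernel: "semi_Markov_kernel Q"
    and regular: "\<exists>\<delta>>0. \<exists>\<epsilon>>0. \<forall>x. measure (Q \<delta> x) UNIV \<le> 1 - \<epsilon>"
    and c_meas: "c \<in> borel_measurable borel" and c_nonneg: "\<forall>x. 0 \<le> c x"
    and g_meas: "g \<in> borel_measurable borel" and g_nonneg: "\<forall>x. 0 \<le> g x"
    and T_nonneg: "0 \<le> T"
    and pi: "d \<in> Pi0_DH"
  shows "\<forall>x s P Ph. s \<in> {0..T} \<longrightarrow> is_Px Q x P \<longrightarrow> is_Phat Q T d s x Ph \<longrightarrow>
           U_val c g Ph s = V_val c g (tau d s) P s"
proof (intro allI impI)
  fix x s P Ph
  assume s: "s \<in> {0..T}" and P: "is_Px Q x P" and Ph: "is_Phat Q T d s x Ph"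
  interpret smp_policy Q x P T d s
    using kernel P pi T_nonneg by unfold_locales
  have "U_val c g Ph s = (\<integral>\<^sup>+\<omega>. smdp_reward c g s \<omega> \<partial>Phat)"
    by (simp add: U_val_eq_smdp_reward is_Phat_eq_Phat[OF Ph])
  also have "\<dots> = (\<integral>\<^sup>+\<omega>. smdp_reward c g s (smdp_path d s T \<omega>) \<partial>P)"
    using measurable_smdp_reward[OF c_meas g_meas] by (simp add: nn_integral_distr)
  also have "\<dots> = (\<integral>\<^sup>+\<omega>. reward c g s (tau d s \<omega>) \<omega> \<partial>P)"
  proof (rule nn_integral_cong_AE)
    show "AE \<omega> in P. smdp_reward c g s (smdp_path d s T \<omega>) = reward c g s (tau d s \<omega>) \<omega>"
      using AE_all_sojourn_pos AE_Sn_unbounded[OF regular, of s]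
      by eventually_elim (use pi s in \<open>auto intro: smdp_reward_smdp_path\<close>)
  qed
  finally show "U_val c g Ph s = V_val c g (tau d s) P s"
    by (simp add: V_val_def)
qed

end
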